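(* Let $n\ge5$ and let $w$ be a $cd$-monomial of degree $n-2$ with $m$ occurrences of the variable $d$. Then there are at least $2^m$ André permutations $\pi$ of $[n]$ with $W(\pi)=wd$ and $\pi(n)=n-1$. Consequently, $[wd]\check\Phi^n_1\ge2^m$.
   Context: A permutation of a totally ordered finite set $X$ is a bijection $\pi:[|X|]\to X$; $i$ is a descent if $\pi(i)>\pi(i+1)$; a double descent is a pair of consecutive descents $i,i+1$. $\pi$ (with $|X|=n$) is an André permutation if (1) it has no double descent and (2) for all $2\le j<j'\le n-1$ with $\pi(j-1)=\max\{\pi(j-1),\pi(j),\pi(j'-1),\pi(j')\}$ and $\pi(j')=\min\{\pi(j-1),\pi(j),\pi(j'-1),\pi(j')\}$ there is $j<j''<j'$ with $\pi(j'')<\pi(j')$. The $cd$-type $W(\pi)$ (degree $n$, $\deg c=1,\deg d=2$): $1$ for the empty permutation, $c$ if $n=1$, and for $n\ge2$, $W(\pi)=W(\pi|_{[n-2]})d$ if $n-1$ is a descent, $W(\pi)=W(\pi|_{[n-1]})c$ otherwise. $[w]p$ is the coefficient of $w$ in $p$. The polynomials $\check\Phi^n_i$: let $\Lambda^n$ be the boundary of an $n$-simplex with facets $\sigma_0,\dots,\sigma_n$; $\Gamma^n_i$ the complex generated by $\sigma_0,\dots,\sigma_i$; $\Lambda^n_i$ the CW complex obtained by attaching a new $(n-1)$-cell $\tau$ to $\Gamma^n_i$ with $\partial\tau=\partial\Gamma^n_i$. $\Phi_\Lambda$ is the $cd$-index of the face poset $Q$ of $\Lambda$ with $\hat0,\hat1$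 adjoined: $\Phi_Q(a+b,ab+ba)=\sum_{S\subseteq[n]}h_S(Q)u_S$, $h_S(Q)=\sum_{T\subseteq S}(-1)^{|S\setminus T|}f_T(Q)$, $f_T(Q)$ the number of chains of $Q\setminus\{\hat0,\hat1\}$ with rank set $T$, $u_S=u_1\cdots u_n$ with $u_i=b$ if $i\in S$ and $a$ otherwise. $\check\Phi^n_0=\Phi_{\Lambda^n_0}$, $\check\Phi^n_i=\Phi_{\Lambda^n_i}-\Phi_{\Lambda^n_{i-1}}$ ($1\le i\le n-1$). *)

theory Defs
  imports Main
begin

text \<open>A permutation pi of a totally ordered finite set X (here a finite set of naturals)
  is represented by the list [pi(1), ..., pi(|X|)] of distinct elements; positions are
  1-indexed via perm_at.\<close>

definition perm_at :: "nat list \<Rightarrow> nat \<Rightarrow> nat" where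
  "perm_at xs i = xs ! (i - 1)"

definition is_descent :: "nat list \<Rightarrow> nat \<Rightarrow> bool" where
  "is_descent xs i \<longleftrightarrow> 1 \<le> i \<and> i + 1 \<le> length xs \<and> perm_at xs i > perm_at xs (i + 1)"

definition is_andre :: "nat list \<Rightarrow> bool" where
  "is_andre xs \<longleftrightarrow>
     distinct xs \<and>
     (\<nexists>i. is_descent xs i \<and> is_descent xs (i + 1)) \<and>
     (\<forall>j j'. 2 \<le> j \<and> j < j' \<and> j' \<le> length xs - 1 \<longrightarrow>
        (let p = perm_at xs; M = {p (j - 1), p j, p (j' - 1), p j'} in
          p (j - 1) = Max M \<and> p j' = Min M \<longrightarrow>
          (\<exists>j''. j < j'' \<and> j'' < j' \<and> p j'' < p j')))"

datatype cd = C | D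

fun cd_deg :: "cd list \<Rightarrow> nat" where
  "cd_deg [] = 0"
| "cd_deg (C # w) = Suc (cd_deg w)"
| "cd_deg (D # w) = Suc (Suc (cd_deg w))"

fun cd_type_rev :: "nat list \<Rightarrow> cd list" where
  "cd_type_rev [] = []"
| "cd_type_rev [x] = [C]"
| "cd_type_rev (x # y # zs) =
     (if y > x then cd_type_rev zs @ [D] else cd_type_rev (y # zs) @ [C])"

definition cd_type :: "nat list \<Rightarrow> cd list" where
  "cd_type xs = cd_type_rev (rev xs)"

text \<open>A graded poset Q with \<hat>0, \<hat>1 adjoined is given by its proper part E,
  a strict order lt and a rank function rk (with rank \<hat>0 = 0).\<close>

definition is_chain :: "('a \<Rightarrow> 'a \<Rightarrow> bool) \<Rightarrow> 'a set \<Rightarrow> bool" where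
  "is_chain lt c \<longleftrightarrow> (\<forall>x\<in>c. \<forall>y\<in>c. x \<noteq> y \<longrightarrow> lt x y \<or> lt y x)"

definition flag_f :: "'a set \<Rightarrow> ('a \<Rightarrow> 'a \<Rightarrow> bool) \<Rightarrow> ('a \<Rightarrow> nat) \<Rightarrow> nat set \<Rightarrow> int" where
  "flag_f E lt rk T = int (card {c. c \<subseteq> E \<and> is_chain lt c \<and> rk ` c = T})"

definition flag_h :: "'a set \<Rightarrow> ('a \<Rightarrow> 'a \<Rightarrow> bool) \<Rightarrow> ('a \<Rightarrow> nat) \<Rightarrow> nat set \<Rightarrow> int" where
  "flag_h E lt rk S = (\<Sum>T\<in>Pow S. (-1) ^ card (S - T) * flag_f E lt rk T)"

text \<open>ab-words are bool lists (True = b, False = a); u_S has b exactly at positions in S.\<close>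
definition b_positions :: "bool list \<Rightarrow> nat set" where
  "b_positions u = {i. 1 \<le> i \<and> i \<le> length u \<and> u ! (i - 1)}"

text \<open>Coefficient of the ab-word u in the cd-monomial w evaluated at c = a+b, d = ab+ba.\<close>
fun cd_expand :: "cd list \<Rightarrow> bool list \<Rightarrow> int" where
  "cd_expand [] [] = 1"
| "cd_expand (C # w) (x # u) = cd_expand w u"
| "cd_expand (D # w) (x # y # u) = (if x \<noteq> y then cd_expand w u else 0)"
| "cd_expand _ _ = 0"

text \<open>Phi is the cd-index of the rank-(n+1) poset: Phi(a+b,ab+ba) = sum_S h_S u_S.\<close>
definition is_cd_index ::
  "'a set \<Rightarrow> ('a \<Rightarrow> 'a \<Rightarrow> bool) \<Rightarrow> ('a \<Rightarrow> nat) \<Rightarrow> nat \<Rightarrow> (cd list \<Rightarrow> int) \<Rightarrow> bool" where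
  "is_cd_index E lt rk n Phi \<longleftrightarrow>
     (\<forall>w. cd_deg w \<noteq> n \<longrightarrow> Phi w = 0) \<and>
     (\<forall>u. length u = n \<longrightarrow>
        (\<Sum>w\<in>{w. cd_deg w = n}. Phi w * cd_expand w u) = flag_h E lt rk (b_positions u))"

definition cd_index ::
  "'a set \<Rightarrow> ('a \<Rightarrow> 'a \<Rightarrow> bool) \<Rightarrow> ('a \<Rightarrow> nat) \<Rightarrow> nat \<Rightarrow> cd list \<Rightarrow> int" where
  "cd_index E lt rk n = (THE Phi. is_cd_index E lt rk n Phi)"

text \<open>Vertices of the n-simplex: {0..n}; facet sigma_j = {0..n} - {j}.
  Cells of Lambda^n_i: Some F for a nonempty face F of Gamma^n_i (rank = card F),
  and None for the new (n-1)-cell tau (rank n).  A face F lies in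
  the boundary of Gamma^n_i iff it misses some j <= i and some k with i < k <= n.\<close>

definition Lam_elems :: "nat \<Rightarrow> nat \<Rightarrow> nat set option set" where
  "Lam_elems n i = Some ` {F. F \<noteq> {} \<and> (\<exists>j\<le>i. F \<subseteq> {0..n} - {j})} \<union> {None}"

definition Lam_less :: "nat \<Rightarrow> nat \<Rightarrow> nat set option \<Rightarrow> nat set option \<Rightarrow> bool" where
  "Lam_less n i x y = (case (x, y) of
       (Some F, Some G) \<Rightarrow> F \<subset> G
     | (Some F, None) \<Rightarrow> (\<exists>j k. j \<le> i \<and> i < k \<and> k \<le> n \<and> j \<notin> F \<and> k \<notin> F)
     | _ \<Rightarrow> False)"

definition Lam_rank :: "nat \<Rightarrow> nat set option \<Rightarrow> nat" where
  "Lam_rank n x = (case x of Some F \<Rightarrow> card F | None \<Rightarrow> n)"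

definition Phi_Lam :: "nat \<Rightarrow> nat \<Rightarrow> cd list \<Rightarrow> int" where
  "Phi_Lam n i = cd_index (Lam_elems n i) (Lam_less n i) (Lam_rank n) n"

definition Phi_check :: "nat \<Rightarrow> nat \<Rightarrow> cd list \<Rightarrow> int" where
  "Phi_check n i w = (if i = 0 then Phi_Lam n 0 w else Phi_Lam n i w - Phi_Lam n (i - 1) w)"

end

theory Submission
  imports Defs
begin

text \<open>
  For the count of Andre permutations, split \<open>w\<close> into the pieces c, cd, dc, dd, dcd, ddd. For
  each piece \<open>p\<close> there are at least \<open>2 ^ count_list p D\<close> permutations \<open>\<sigma>\<close> of cd-type \<open>p\<close> such that
  \<open>\<sigma>\<close> followed by its maximum plus one is Andre (they are listed explicitly), and juxtaposing two
  such permutations, the second shifted above the first, gives one of this kind for the product of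
  their types. Appending \<open>n, n - 1\<close> turns them into Andre permutations of cd-type wd ending in
  \<open>n - 1\<close>.

  For the cd-index, the flag f-vectors of \<Lambda>^n_0 and \<Lambda>^n_1 are counted as chains of faces of
  the facets \<sigma>_0, \<sigma>_1 (with inclusion-exclusion over \<sigma>_0 \<inter> \<sigma>_1) and of the cell \<tau>.
  Comparing with the flag f-vectors of Boolean algebras gives \<Phi>(\<Lambda>^n_0) = \<Phi>_{n-1} c and
  \<Phi>(\<Lambda>^n_1) = 2 \<Phi>_{n-1} c - \<Phi>_{n-2} cc + \<Phi>_{n-2} d, where \<Phi>_k is the cd-index of B_{k+1};
  hence [wd] \<Phi>-check^n_1 = [w] \<Phi>_{n-2}. In the recursion \<Phi>_{k+1} = \<Phi>_k c + G(\<Phi>_k) with the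
  derivation G(c) = d, G(d) = cd, a monomial ending in c comes from \<Phi>_k c, one ending in cd from
  G(...d), and one ending in dd from both G(...dc) and G(...cd); induction from degree 3 gives
  [w] \<Phi>_k \<ge> 2 ^ (number of d in w).
\<close>

section \<open>Andre permutations\<close>

definition no_double_descent :: "nat list \<Rightarrow> bool" where
  "no_double_descent xs \<longleftrightarrow>
     (\<forall>k. k + 2 < length xs \<longrightarrow> \<not> (xs ! (k + 2) < xs ! (k + 1) \<and> xs ! (k + 1) < xs ! k))"

text \<open>Condition (2) with 0-based positions \<open>p = j - 2\<close>, \<open>q = j' - 2\<close>; of the six inequalities
  saying that \<open>xs ! p\<close> is the maximum and \<open>xs ! (q + 1)\<close> the minimum of the four entries, the
  redundant \<open>xs ! (q + 1) \<le> xs ! p\<close> is dropped (\<open>andre_condition_iff\<close>).\<close>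

definition andre_condition :: "nat list \<Rightarrow> bool" where
  "andre_condition xs \<longleftrightarrow>
     (\<forall>p q. p < q \<longrightarrow> q + 2 < length xs \<longrightarrow>
        xs ! (p + 1) \<le> xs ! p \<longrightarrow> xs ! q \<le> xs ! p \<longrightarrow>
        xs ! (q + 1) \<le> xs ! (p + 1) \<longrightarrow> xs ! (q + 1) \<le> xs ! q \<longrightarrow>
        (\<exists>r. p + 2 \<le> r \<and> r \<le> q \<and> xs ! r < xs ! (q + 1)))"

lemma no_double_descent_iff:
  "(\<nexists>i. is_descent xs i \<and> is_descent xs (i + 1)) \<longleftrightarrow> no_double_descent xs"
proof -
  have "is_descent xs i \<longleftrightarrow> (\<exists>k. i = Suc k \<and> k + 1 < length xs \<and> xs ! (k + 1) < xs ! k)" for i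
    by (cases i) (auto simp: is_descent_def perm_at_def)
  then show ?thesis
    by (auto simp: no_double_descent_def)
qed

lemma eq_Max_four_iff: "(a::'a::linorder) = Max {a, b, c, d} \<longleftrightarrow> b \<le> a \<and> c \<le> a \<and> d \<le> a"
  by (auto simp: max_def)

lemma eq_Min_four_iff: "(d::'a::linorder) = Min {a, b, c, d} \<longleftrightarrow> d \<le> a \<and> d \<le> b \<and> d \<le> c"
  by (auto simp: min_def)

lemma andre_condition_iff:
  "(\<forall>j j'. 2 \<le> j \<and> j < j' \<and> j' \<le> length xs - 1 \<longrightarrow>
      (let p = perm_at xs; M = {p (j - 1), p j, p (j' - 1), p j'} in
        p (j - 1) = Max M \<and> p j' = Min M \<longrightarrow> (\<exists>j''. j < j'' \<and> j'' < j' \<and> p j'' < p j')))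
   \<longleftrightarrow> andre_condition xs"
proof -
  have shift: "(\<forall>j j'. 2 \<le> j \<and> j < j' \<and> j' \<le> L - 1 \<longrightarrow> Q j j')
      \<longleftrightarrow> (\<forall>p q. p < q \<longrightarrow> q + 2 < L \<longrightarrow> Q (p + 2) (q + 2))" for L and Q :: "nat \<Rightarrow> nat \<Rightarrow> bool"
  proof safe
    fix j j' assume "\<forall>p q. p < q \<longrightarrow> q + 2 < L \<longrightarrow> Q (p + 2) (q + 2)"
      and "2 \<le> j" "j < j'" "j' \<le> L - 1"
    then have "Q (j - 2 + 2) (j' - 2 + 2)" by simp
    moreover have "j - 2 + 2 = j" "j' - 2 + 2 = j'" using \<open>2 \<le> j\<close> \<open>j < j'\<close> by simp_all
    ultimately show "Q j j'" by metis
  qed auto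
  have entries: "perm_at xs (p + 2 - 1) = xs ! p" "perm_at xs (p + 2) = xs ! (p + 1)" for p
    by (simp_all add: perm_at_def)
  have between: "(\<exists>j''. p + 2 < j'' \<and> j'' < q + 2 \<and> perm_at xs j'' < y)
      \<longleftrightarrow> (\<exists>r. p + 2 \<le> r \<and> r \<le> q \<and> xs ! r < y)" for p q y
  proof
    assume "\<exists>j''. p + 2 < j'' \<and> j'' < q + 2 \<and> perm_at xs j'' < y"
    then obtain j'' where "p + 2 < j''" "j'' < q + 2" "perm_at xs j'' < y" by blast
    then show "\<exists>r. p + 2 \<le> r \<and> r \<le> q \<and> xs ! r < y"
      by (intro exI[of _ "j'' - 1"]) (auto simp: perm_at_def)
  next
    assume "\<exists>r. p + 2 \<le> r \<and> r \<le> q \<and> xs ! r < y"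
    then obtain r where "p + 2 \<le> r" "r \<le> q" "xs ! r < y" by blast
    then show "\<exists>j''. p + 2 < j'' \<and> j'' < q + 2 \<and> perm_at xs j'' < y"
      by (intro exI[of _ "r + 1"]) (auto simp: perm_at_def)
  qed
  show ?thesis
    unfolding shift Let_def entries between eq_Max_four_iff eq_Min_four_iff andre_condition_def
    by (meson order_trans)
qed

lemma is_andre_iff: "is_andre xs \<longleftrightarrow> distinct xs \<and> no_double_descent xs \<and> andre_condition xs"
  unfolding is_andre_def no_double_descent_iff andre_condition_iff ..

lemma no_double_descent_append:
  assumes xs: "no_double_descent xs" and ys: "no_double_descent ys"
    and less: "\<forall>x\<in>set xs. \<forall>y\<in>set ys. x < y"
  shows "no_double_descent (xs @ ys)"
  unfolding no_double_descent_def
proof (intro allI impI notI)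
  fix k
  let ?zs = "xs @ ys" and ?L = "length xs"
  assume k: "k + 2 < length ?zs" and descents: "?zs ! (k + 2) < ?zs ! (k + 1) \<and> ?zs ! (k + 1) < ?zs ! k"
  have ascent: "?zs ! i < ?zs ! i'" if "i < ?L" "?L \<le> i'" "i' < length ?zs" for i i'
    using less that by (simp add: nth_append)
  consider "k + 2 < ?L" | "?L \<le> k" | "k < ?L" "?L \<le> k + 2" by linarith
  then show False
  proof cases
    case 1
    then show False using xs[unfolded no_double_descent_def, rule_format, of k] descents
      by (simp add: nth_append)
  next
    case 2
    then obtain k' where k': "k = ?L + k'" using le_Suc_ex by blast
    then show False using ys[unfolded no_double_descent_def, rule_format, of k'] k descents
      by (simp add: nth_append)
  next
    case 3
    then show False using descents ascent[of k "k + 1"] ascent[of "k + 1" "k + 2"] k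
      by (cases "k + 1 < ?L") auto
  qed
qed

lemma no_double_descent_appendD:
  assumes "no_double_descent (xs @ ys)"
  shows "no_double_descent xs"
  unfolding no_double_descent_def
proof (intro allI impI)
  fix k assume "k + 2 < length xs"
  then show "\<not> (xs ! (k + 2) < xs ! (k + 1) \<and> xs ! (k + 1) < xs ! k)"
    using assms[unfolded no_double_descent_def, rule_format, of k] by (simp add: nth_append)
qed

lemma andre_condition_append:
  assumes xs: "andre_condition (xs @ [c])" and ys: "andre_condition ys"
    and less: "\<forall>x\<in>set xs. \<forall>y\<in>set ys. x < y"
  shows "andre_condition (xs @ ys)"
  unfolding andre_condition_def
proof (intro allI impI)
  fix p q
  let ?zs = "xs @ ys" and ?L = "length xs"
  assume pq: "p < q" "q + 2 < length ?zs"
    and max: "?zs ! (p + 1) \<le> ?zs ! p" "?zs ! q \<le> ?zs ! p"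
    and min: "?zs ! (q + 1) \<le> ?zs ! (p + 1)" "?zs ! (q + 1) \<le> ?zs ! q"
  consider "q + 2 \<le> ?L" | "p < ?L" "?L \<le> q + 1" | "?L \<le> p" by linarith
  then show "\<exists>r. p + 2 \<le> r \<and> r \<le> q \<and> ?zs ! r < ?zs ! (q + 1)"
  proof cases
    case 1
    then show ?thesis using xs[unfolded andre_condition_def, rule_format, of p q] pq max min
      by (simp add: nth_append cong: conj_cong)
  next
    case 2
    then have "?zs ! p < ?zs ! (q + 1)" using less pq by (simp add: nth_append)
    then show ?thesis using max min by simp
  next
    case 3
    define p' q' where "p' = p - ?L" and "q' = q - ?L"
    have shifted: "p = ?L + p'" "q = ?L + q'" using 3 pq by (simp_all add: p'_def q'_def)
    obtain r where "p' + 2 \<le> r" "r \<le> q'" "ys ! r < ys ! (q' + 1)"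
      using ys[unfolded andre_condition_def, rule_format, of p' q'] pq max min
      by (auto simp: shifted nth_append)
    then show ?thesis
      by (intro exI[of _ "?L + r"]) (simp add: shifted nth_append)
  qed
qed

lemma is_andre_append:
  assumes "is_andre (xs @ [c])" and "is_andre ys" and "\<forall>x\<in>set xs. \<forall>y\<in>set ys. x < y"
  shows "is_andre (xs @ ys)"
  using assms
  by (auto simp: is_andre_iff dest: no_double_descent_appendD
      intro: no_double_descent_append andre_condition_append)

lemma is_andre_map_add: "is_andre (map (\<lambda>x. x + k) xs) \<longleftrightarrow> is_andre xs"
  by (simp add: is_andre_iff no_double_descent_def andre_condition_def distinct_map cong: conj_cong)

lemma is_andre_short: "distinct xs \<Longrightarrow> length xs \<le> 2 \<Longrightarrow> is_andre xs"
  by (simp add: is_andre_iff no_double_descent_def andre_condition_def)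

lemma cd_deg_append: "cd_deg (v @ w) = cd_deg v + cd_deg w"
  by (induction v rule: cd_deg.induct) auto

lemma cd_deg_cd_type_rev: "cd_deg (cd_type_rev xs) = length xs"
  by (induction xs rule: cd_type_rev.induct) (auto simp: cd_deg_append)

lemma cd_type_rev_append:
  "xs = [] \<or> ys = [] \<or> hd ys < last xs \<Longrightarrow> cd_type_rev (xs @ ys) = cd_type_rev ys @ cd_type_rev xs"
proof (induction xs rule: cd_type_rev.induct)
  case (2 x)
  then show ?case by (cases ys) auto
next
  case (3 x y zs)
  then show ?case by (cases "zs = []") auto
qed simp

lemma cd_type_append:
  "xs = [] \<or> ys = [] \<or> last xs < hd ys \<Longrightarrow> cd_type (xs @ ys) = cd_type xs @ cd_type ys"
  unfolding cd_type_def using cd_type_rev_append[of "rev ys" "rev xs"] by (auto simp: hd_rev last_rev)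

lemma cd_type_map_add: "cd_type (map (\<lambda>x. x + k) xs) = cd_type xs"
proof -
  have "cd_type_rev (map (\<lambda>x. x + k) xs) = cd_type_rev xs" for xs
    by (induction xs rule: cd_type_rev.induct) auto
  then show ?thesis by (simp add: cd_type_def rev_map)
qed

text \<open>The appended maximum stands for the larger entries that follow \<open>xs\<close> once it is
  juxtaposed with a shifted permutation (\<open>is_andre_append\<close>).\<close>

definition andre_prefixes :: "cd list \<Rightarrow> nat list set" where
  "andre_prefixes w = {xs. distinct xs \<and> set xs = {1..length xs}
     \<and> is_andre (xs @ [Suc (length xs)]) \<and> cd_type xs = w}"

lemma length_andre_prefixes: "xs \<in> andre_prefixes w \<Longrightarrow> length xs = cd_deg w"
  using cd_deg_cd_type_rev[of "rev xs"] by (auto simp: andre_prefixes_def cd_type_def)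

lemma finite_andre_prefixes: "finite (andre_prefixes w)"
proof (rule finite_subset)
  show "andre_prefixes w \<subseteq> {xs. set xs \<subseteq> {1..cd_deg w} \<and> length xs = cd_deg w}"
    using length_andre_prefixes by (auto simp: andre_prefixes_def)
qed (simp add: finite_lists_length_eq)

lemma set_map_add_atLeastAtMost: "set (map (\<lambda>y. y + k) ys) = {Suc k..k + m}" if "set ys = {1..m}"
proof -
  have "(\<lambda>y. y + k) ` {1..m} = {Suc k..k + m}"
    by (auto simp: image_iff intro!: bexI[where x = "_ - k"])
  then show ?thesis using that by simp
qed

lemma shift_append_andre_prefixes:
  assumes xs: "xs \<in> andre_prefixes v" and ys: "ys \<in> andre_prefixes w"
  shows "xs @ map (\<lambda>y. y + length xs) ys \<in> andre_prefixes (v @ w)"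
proof -
  let ?L = "length xs" and ?M = "length ys"
  let ?ys' = "map (\<lambda>y. y + ?L) ys"
  have xs_props: "distinct xs" "set xs = {1..?L}" "is_andre (xs @ [Suc ?L])" "cd_type xs = v"
    using xs by (auto simp: andre_prefixes_def)
  have ys_props: "distinct ys" "set ys = {1..?M}" "is_andre (ys @ [Suc ?M])" "cd_type ys = w"
    using ys by (auto simp: andre_prefixes_def)
  have set_ys': "set ?ys' = {Suc ?L..?L + ?M}"
    by (rule set_map_add_atLeastAtMost[OF ys_props(2)])
  have "is_andre (map (\<lambda>y. y + ?L) (ys @ [Suc ?M]))"
    unfolding is_andre_map_add by (rule ys_props(3))
  then have "is_andre (xs @ map (\<lambda>y. y + ?L) (ys @ [Suc ?M]))"
    by (rule is_andre_append[OF xs_props(3)]) (use xs_props(2) ys_props(2) in auto)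
  moreover have "last xs < hd ?ys'" if "xs \<noteq> []" "ys \<noteq> []"
    using that xs_props(2) set_ys' last_in_set[of xs] hd_in_set[of ?ys'] by fastforce
  then have "cd_type (xs @ ?ys') = v @ w"
    by (subst cd_type_append) (auto simp: cd_type_map_add xs_props(4) ys_props(4))
  ultimately show ?thesis
    using xs_props(1,2) ys_props(1) set_ys'
    by (auto simp: andre_prefixes_def distinct_map inj_on_def add.commute)
qed

lemma card_andre_prefixes_append:
  "card (andre_prefixes v) * card (andre_prefixes w) \<le> card (andre_prefixes (v @ w))"
proof -
  let ?f = "\<lambda>(xs, ys). xs @ map (\<lambda>y. y + length xs) ys"
  have "inj_on ?f (andre_prefixes v \<times> andre_prefixes w)"
    by (rule inj_onI) (auto simp: length_andre_prefixes)
  then have "card (andre_prefixes v \<times> andre_prefixes w) = card (?f ` (andre_prefixes v \<times> andre_prefixes w))"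
    by (simp add: card_image)
  also have "\<dots> \<le> card (andre_prefixes (v @ w))"
    by (intro card_mono finite_andre_prefixes) (auto intro: shift_append_andre_prefixes)
  finally show ?thesis by (simp add: card_cartesian_product)
qed

lemma no_double_descent_code:
  "no_double_descent xs \<longleftrightarrow>
     list_all (\<lambda>k. \<not> (xs ! (k + 2) < xs ! (k + 1) \<and> xs ! (k + 1) < xs ! k)) [0..<length xs - 2]"
  by (auto simp: no_double_descent_def list_all_iff)

lemma andre_condition_code:
  "andre_condition xs \<longleftrightarrow>
     list_all (\<lambda>q. list_all (\<lambda>p.
        xs ! (p + 1) \<le> xs ! p \<longrightarrow> xs ! q \<le> xs ! p \<longrightarrow>
        xs ! (q + 1) \<le> xs ! (p + 1) \<longrightarrow> xs ! (q + 1) \<le> xs ! q \<longrightarrow>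
        list_ex (\<lambda>r. xs ! r < xs ! (q + 1)) [p + 2..<Suc q]) [0..<q]) [0..<length xs - 2]"
  unfolding andre_condition_def list_all_iff list_ex_iff set_upt by fastforce

lemma card_andre_prefixes_ge:
  assumes "\<forall>xs\<in>set xss. distinct xs \<and> set xs = {1..length xs} \<and> cd_type xs = w \<and>
       no_double_descent (xs @ [Suc (length xs)]) \<and> andre_condition (xs @ [Suc (length xs)])"
    and "distinct xss" and "k \<le> length xss"
  shows "k \<le> card (andre_prefixes w)"
proof -
  have "set xss \<subseteq> andre_prefixes w"
    using assms(1) by (auto simp: andre_prefixes_def is_andre_iff)
  then show ?thesis
    using assms(2,3) by (metis card_mono distinct_card finite_andre_prefixes order_trans)
qed

lemma card_andre_prefixes_pieces:
  assumes "w \<in> {[], [C], [C, D], [D, C], [D, D], [D, C, D], [D, D, D]}"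
  shows "2 ^ count_list w D \<le> card (andre_prefixes w)"
  using assms
proof (elim insertE emptyE)
  note check = no_double_descent_code andre_condition_code cd_type_def upt_rec
  show ?thesis if "w = []"
    using that by (intro card_andre_prefixes_ge[where xss = "[[]]"]) (auto simp: check)
  show ?thesis if "w = [C]"
    using that by (intro card_andre_prefixes_ge[where xss = "[[1]]"]) (auto simp: check)
  show ?thesis if "w = [C, D]"
    using that by (intro card_andre_prefixes_ge[where xss = "[[1,3,2], [2,3,1]]"]) (auto simp: check)
  show ?thesis if "w = [D, C]"
    using that by (intro card_andre_prefixes_ge[where xss = "[[2,1,3], [3,1,2]]"]) (auto simp: check)
  show ?thesis if "w = [D, D]"
    using that
    by (intro card_andre_prefixes_ge[where xss = "[[2,1,4,3], [3,1,4,2], [3,2,4,1], [4,1,3,2]]"])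
      (auto simp: check)
  show ?thesis if "w = [D, C, D]"
    using that
    by (intro card_andre_prefixes_ge[where xss = "[[2,1,3,5,4], [2,1,4,5,3], [3,1,2,5,4], [3,1,4,5,2]]"])
      (auto simp: check)
  show ?thesis if "w = [D, D, D]"
    using that
    by (intro card_andre_prefixes_ge[where xss = "[[2,1,4,3,6,5], [2,1,5,3,6,4], [2,1,5,4,6,3],
      [2,1,6,3,5,4], [3,1,4,2,6,5], [3,1,5,2,6,4], [3,1,5,4,6,2], [3,1,6,2,5,4]]"])
      (auto simp: check)
qed

lemma cd_split_piece:
  assumes "w \<noteq> []" and "w \<noteq> [D]"
  obtains p r where "w = p @ r" and "p \<in> {[C], [C, D], [D, C], [D, D], [D, C, D], [D, D, D]}"
    and "r \<noteq> [D]"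
proof -
  obtain x r where w: "w = x # r" using assms(1) by (cases w) auto
  show ?thesis
  proof (cases x)
    case C
    then show ?thesis
      using that[of "[C, D]" "[]"] that[of "[C]" r] w by (cases "r = [D]") auto
  next
    case D
    then obtain y r' where r: "r = y # r'" using assms(2) w by (cases r) auto
    show ?thesis
    proof (cases y)
      case C
      then show ?thesis
        using that[of "[D, C, D]" "[]"] that[of "[D, C]" r'] w r D by (cases "r' = [D]") auto
    next
      case D
      then show ?thesis
        using that[of "[D, D, D]" "[]"] that[of "[D, D]" r'] w r \<open>x = D\<close> by (cases "r' = [D]") auto
    qed
  qed
qed

lemma card_andre_prefixes_lower_bound:
  "w \<noteq> [D] \<Longrightarrow> 2 ^ count_list w D \<le> card (andre_prefixes w)"
proof (induction "length w" arbitrary: w rule: less_induct)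
  case less
  show ?case
  proof (cases "w = []")
    case True
    then show ?thesis using card_andre_prefixes_pieces[of "[]"] by simp
  next
    case False
    then obtain p r where w: "w = p @ r" and p: "p \<in> {[C], [C, D], [D, C], [D, D], [D, C, D], [D, D, D]}"
      and r: "r \<noteq> [D]"
      using less.prems by (rule cd_split_piece)
    have "length r < length w" using w p by auto
    then have IH: "2 ^ count_list r D \<le> card (andre_prefixes r)" using less r by blast
    have "(2::nat) ^ count_list w D = 2 ^ count_list p D * 2 ^ count_list r D"
      by (simp add: w power_add)
    also have "\<dots> \<le> card (andre_prefixes p) * card (andre_prefixes r)"
      using card_andre_prefixes_pieces[of p] p IH by (intro mult_le_mono) auto
    also have "\<dots> \<le> card (andre_prefixes w)"
      unfolding w by (rule card_andre_prefixes_append)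
    finally show ?thesis .
  qed
qed

lemma append_top_descent_andre:
  assumes "xs \<in> andre_prefixes w"
  defines "n \<equiv> length xs + 2"
  shows "distinct (xs @ [n, n - 1]) \<and> set (xs @ [n, n - 1]) = {1..n} \<and> is_andre (xs @ [n, n - 1])
    \<and> cd_type (xs @ [n, n - 1]) = w @ [D] \<and> perm_at (xs @ [n, n - 1]) n = n - 1"
proof -
  have n: "n = Suc (Suc (length xs))" "n - 1 = Suc (length xs)" by (simp_all add: n_def)
  have props: "distinct xs" "set xs = {1..length xs}" "is_andre (xs @ [n - 1])" "cd_type xs = w"
    using assms(1) n by (simp_all add: andre_prefixes_def)
  have "is_andre (xs @ [n, n - 1])"
    using props(2) n by (intro is_andre_append[OF props(3) is_andre_short]) auto
  moreover have "cd_type (xs @ [n, n - 1]) = w @ [D]"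
  proof -
    have "last xs \<le> length xs" if "xs \<noteq> []" using last_in_set[OF that] props(2) by auto
    then have "xs = [] \<or> last xs < hd [n, n - 1]" using n by force
    moreover have "cd_type [n, n - 1] = [D]" using n by (simp add: cd_type_def)
    ultimately show ?thesis by (simp add: cd_type_append props(4))
  qed
  moreover have "set (xs @ [n, n - 1]) = {1..n}"
    using props(2) n by (auto simp: atLeastAtMostSuc_conv)
  moreover have "perm_at (xs @ [n, n - 1]) n = n - 1"
    using n by (simp add: perm_at_def nth_append)
  ultimately show ?thesis using props(1,2) n by auto
qed

lemma card_andre_top_descent_lower_bound:
  assumes "cd_deg w + 2 = n" and "w \<noteq> [D]"
  shows "2 ^ count_list w D \<le> card {xs. distinct xs \<and> set xs = {1..n} \<and> is_andre xs
                          \<and> cd_type xs = w @ [D] \<and> perm_at xs n = n - 1}"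
    (is "_ \<le> card ?S")
proof -
  let ?f = "\<lambda>xs. xs @ [n, n - 1]"
  have "finite ?S"
  proof (rule finite_subset)
    show "?S \<subseteq> {xs. set xs \<subseteq> {1..n} \<and> length xs = n}"
      by (auto dest: distinct_card)
  qed (simp add: finite_lists_length_eq)
  moreover have "?f ` andre_prefixes w \<subseteq> ?S"
  proof (rule image_subsetI)
    fix xs assume "xs \<in> andre_prefixes w"
    moreover from this have "length xs + 2 = n" using assms(1) length_andre_prefixes by simp
    ultimately show "?f xs \<in> ?S" using append_top_descent_andre[of xs w] by simp
  qed
  ultimately have "card (?f ` andre_prefixes w) \<le> card ?S"
    by (rule card_mono)
  moreover have "card (?f ` andre_prefixes w) = card (andre_prefixes w)"
    by (rule card_image) (rule inj_onI, simp)
  ultimately show ?thesis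
    using card_andre_prefixes_lower_bound[OF assms(2)] by linarith
qed

section \<open>cd-monomials and flag f-numbers\<close>

lemma cd_deg_eq_0_iff [simp]: "cd_deg w = 0 \<longleftrightarrow> w = []"
  by (cases w rule: cd_deg.cases) auto

lemma cd_deg_eq_Suc_iff:
  "cd_deg w = Suc k \<longleftrightarrow> (\<exists>v. w = C # v \<and> cd_deg v = k) \<or> (\<exists>v. w = D # v \<and> Suc (cd_deg v) = k)"
  by (cases w rule: cd_deg.cases) auto

lemma finite_cd_deg_eq: "finite {w. cd_deg w = n}"
proof (rule finite_subset)
  have "length w \<le> cd_deg w" for w by (induction w rule: cd_deg.induct) auto
  moreover have "x \<in> {C, D}" for x by (cases x) auto
  ultimately show "{w. cd_deg w = n} \<subseteq> {w. set w \<subseteq> {C, D} \<and> length w \<le> n}" by auto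
qed (simp add: finite_lists_length_le)

lemma sum_count_list_mult:
  assumes "finite A" and "set vs \<subseteq> A"
  shows "(\<Sum>w\<in>A. int (count_list vs w) * f w) = (\<Sum>v\<leftarrow>vs. f v)"
  using assms(2)
proof (induction vs)
  case (Cons x vs)
  have "(\<Sum>w\<in>A. int (count_list (x # vs) w) * f w) = (\<Sum>w\<in>A. (if x = w then f w else 0) + int (count_list vs w) * f w)"
    by (rule sum.cong) (auto simp: algebra_simps)
  also have "\<dots> = f x + (\<Sum>w\<in>A. int (count_list vs w) * f w)"
    using Cons.prems assms(1) by (simp add: sum.distrib)
  finally show ?case using Cons by simp
qed simp

lemma sum_cd_deg_Suc_Suc:
  "(\<Sum>w | cd_deg w = Suc (Suc k). g w) =
     (\<Sum>v | cd_deg v = Suc k. g (C # v)) + (\<Sum>v | cd_deg v = k. g (D # v))"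
proof -
  have "{w. cd_deg w = Suc (Suc k)} = (#) C ` {v. cd_deg v = Suc k} \<union> (#) D ` {v. cd_deg v = k}"
    by (auto simp: cd_deg_eq_Suc_iff)
  then have "(\<Sum>w | cd_deg w = Suc (Suc k). g w) =
      sum g ((#) C ` {v. cd_deg v = Suc k}) + sum g ((#) D ` {v. cd_deg v = k})"
    by (auto intro: sum.union_disjoint simp: finite_cd_deg_eq)
  then show ?thesis
    by (simp add: sum.reindex)
qed

lemma cd_expand_sum_eq_0_imp_eq_0:
  fixes P :: "cd list \<Rightarrow> int"
  assumes "\<And>u. length u = n \<Longrightarrow> (\<Sum>w | cd_deg w = n. P w * cd_expand w u) = 0"
    and "cd_deg w = n"
  shows "P w = 0"
  using assms
proof (induction n arbitrary: P w rule: less_induct)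
  case (less n)
  consider "n = 0" | "n = 1" | k where "n = Suc (Suc k)" by (metis One_nat_def not0_implies_Suc)
  then show ?case
  proof cases
    case 1
    then show ?thesis using less.prems by (simp add: sum_cd_deg_Suc_Suc)
  next
    case 2
    then have "{w. cd_deg w = n} = {[C]}" by (auto simp: cd_deg_eq_Suc_iff)
    moreover from this have "w = [C]" using less.prems(2) by blast
    ultimately show ?thesis using less.prems(1)[of "[False]"] 2 by simp
  next
    case 3
    have split: "(\<Sum>w | cd_deg w = n. P w * cd_expand w (a # b # u)) =
        (\<Sum>v | cd_deg v = Suc k. P (C # v) * cd_expand v (b # u))
        + (\<Sum>v | cd_deg v = k. P (D # v) * (if a \<noteq> b then cd_expand v u else 0))" for a b u
      unfolding 3 sum_cd_deg_Suc_Suc by simp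
    \<comment> \<open>at \<open>aau\<close> only monomials starting with \<open>c\<close> contribute, at \<open>bau\<close> also those with \<open>d\<close>\<close>
    have D_part: "P (D # v) = 0" if "cd_deg v = k" for v
    proof (rule less.IH[of k, OF _ _ that])
      fix u :: "bool list" assume "length u = k"
      then show "(\<Sum>v | cd_deg v = k. P (D # v) * cd_expand v u) = 0"
        using less.prems(1)[of "False # False # u"] less.prems(1)[of "True # False # u"]
          split[of False False u] split[of True False u] 3
        by simp
    qed (use 3 in simp)
    have C_part: "P (C # v) = 0" if "cd_deg v = Suc k" for v
    proof (rule less.IH[of "Suc k", OF _ _ that])
      fix u :: "bool list" assume u: "length u = Suc k"
      then obtain b u' where u: "u = b # u'" by (cases u) auto
      have "(\<Sum>v | cd_deg v = k. P (D # v) * (if False \<noteq> b then cd_expand v u' else 0)) = 0"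
        using D_part by (intro sum.neutral) auto
      then show "(\<Sum>v | cd_deg v = Suc k. P (C # v) * cd_expand v u) = 0"
        using less.prems(1)[of "False # b # u'"] split[of False b u'] \<open>length u = Suc k\<close> u 3 by simp
    qed (use 3 in simp)
    show ?thesis
      using less.prems(2) 3 C_part D_part by (auto simp: cd_deg_eq_Suc_iff)
  qed
qed

lemma cd_index_eqI:
  assumes "is_cd_index E lt rk n Phi"
  shows "cd_index E lt rk n = Phi"
  unfolding cd_index_def
proof (rule the_equality)
  fix Phi' assume Phi': "is_cd_index E lt rk n Phi'"
  show "Phi' = Phi"
  proof
    fix w
    show "Phi' w = Phi w"
    proof (cases "cd_deg w = n")
      case True
      have "Phi' w - Phi w = 0"
        by (rule cd_expand_sum_eq_0_imp_eq_0[OF _ True])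
          (use Phi' assms in \<open>simp add: is_cd_index_def left_diff_distrib sum_subtractf\<close>)
      then show ?thesis by simp
    qed (use Phi' assms in \<open>simp add: is_cd_index_def\<close>)
  qed
qed (rule assms)

text \<open>The contribution of the cd-monomial \<open>w\<close> to the flag f-number \<open>f\<^sub>S\<close>,
  \<open>S = b_positions t\<close>: the coefficients of all ab-words below \<open>t\<close> in the expansion of \<open>w\<close>
  (see \<open>cd_flag_f_eq_sum_lower_words\<close>).\<close>

fun cd_flag_f :: "cd list \<Rightarrow> bool list \<Rightarrow> int" where
  "cd_flag_f [] t = (if t = [] then 1 else 0)"
| "cd_flag_f (C # w) (a # t) = (if a then 2 else 1) * cd_flag_f w t"
| "cd_flag_f (D # w) (a # b # t) = (of_bool a + of_bool b) * cd_flag_f w t"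
| "cd_flag_f _ _ = 0"

fun lower_words :: "bool list \<Rightarrow> bool list list" where
  "lower_words [] = [[]]"
| "lower_words (a # t) =
     map ((#) False) (lower_words t) @ (if a then map ((#) True) (lower_words t) else [])"

lemma length_lower_words: "v \<in> set (lower_words t) \<Longrightarrow> length v = length t"
  by (induction t arbitrary: v) (auto split: if_splits)

lemma distinct_lower_words: "distinct (lower_words t)"
  by (induction t) (auto simp: distinct_map)

lemma count_True_lower_words: "v \<in> set (lower_words t) \<Longrightarrow> count_list v True \<le> count_list t True"
  by (induction t arbitrary: v) (auto split: if_splits intro: le_SucI)

lemma cd_flag_f_eq_sum_lower_words: "cd_flag_f w t = (\<Sum>v\<leftarrow>lower_words t. cd_expand w v)"
proof (induction w t rule: cd_flag_f.induct)
  case (1 t)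
  have "cd_expand [] v = 0" if "v \<in> set (lower_words t)" "t \<noteq> []" for v
    using length_lower_words[OF that(1)] that(2) by (cases v) auto
  then show ?case by (cases "t = []") (simp_all cong: map_cong)
next
  case (3 w a b t)
  then show ?case by (cases a; cases b) (simp_all add: comp_def)
qed (auto simp: comp_def)

lemma alternating_sum_lower_words:
  "(\<Sum>t\<leftarrow>lower_words u. (-1::int) ^ (count_list u True - count_list t True) *
      (\<Sum>v\<leftarrow>lower_words t. g v)) = g u"
proof (induction u arbitrary: g)
  case (Cons a u)
  show ?case
  proof (cases a)
    case False
    then show ?thesis using Cons.IH[of "\<lambda>v. g (False # v)"] by (simp add: comp_def)
  next
    case True
    let ?sign = "\<lambda>t. (-1::int) ^ (count_list u True - count_list t True)"
    let ?F = "\<lambda>t. \<Sum>v\<leftarrow>lower_words t. g (False # v)" and ?T = "\<lambda>t. \<Sum>v\<leftarrow>lower_words t. g (True # v)"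
    have cancel: "(-1) ^ (Suc (count_list u True) - count_list t True) * ?F t + ?sign t * (?F t + ?T t)
        = ?sign t * ?T t" if "t \<in> set (lower_words u)" for t
      using count_True_lower_words[OF that] by (simp add: Suc_diff_le algebra_simps)
    have "(\<Sum>t\<leftarrow>lower_words (a # u). (-1::int) ^ (count_list (a # u) True - count_list t True) *
        (\<Sum>v\<leftarrow>lower_words t. g v))
      = (\<Sum>t\<leftarrow>lower_words u. (-1) ^ (Suc (count_list u True) - count_list t True) * ?F t + ?sign t * (?F t + ?T t))"
      using True by (simp add: comp_def sum_list_addf)
    also have "\<dots> = (\<Sum>t\<leftarrow>lower_words u. ?sign t * ?T t)"
      using cancel by (simp cong: map_cong)
    also have "\<dots> = g (a # u)" using Cons.IH[of "\<lambda>v. g (True # v)"] True by simp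
    finally show ?thesis .
  qed
qed simp

lemma b_positions_Nil [simp]: "b_positions [] = {}"
  by (auto simp: b_positions_def)

lemma b_positions_Cons:
  "b_positions (a # t) = (if a then insert 1 (Suc ` b_positions t) else Suc ` b_positions t)"
proof (rule set_eqI)
  fix i
  show "i \<in> b_positions (a # t) \<longleftrightarrow> i \<in> (if a then insert 1 (Suc ` b_positions t) else Suc ` b_positions t)"
    by (cases i; cases "i - 1") (auto simp: b_positions_def)
qed

lemma b_positions_subset: "b_positions t \<subseteq> {1..length t}"
  by (auto simp: b_positions_def)

lemma finite_b_positions: "finite (b_positions t)"
  using b_positions_subset finite_subset by blast

lemma card_b_positions: "card (b_positions t) = count_list t True"
proof (induction t)
  case (Cons a t)
  have "1 \<notin> Suc ` b_positions t" using b_positions_subset[of t] by auto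
  then show ?case using Cons finite_b_positions[of t] by (simp add: b_positions_Cons card_image)
qed simp

lemma b_positions_inject:
  assumes "length t = length t'" and "b_positions t = b_positions t'"
  shows "t = t'"
proof (rule nth_equalityI)
  fix i assume "i < length t"
  then have "Suc i \<in> b_positions t \<longleftrightarrow> t ! i" "Suc i \<in> b_positions t' \<longleftrightarrow> t' ! i"
    using assms(1) by (auto simp: b_positions_def)
  then show "t ! i = t' ! i" using assms(2) by simp
qed (rule assms(1))

lemma b_positions_lower_words: "t \<in> set (lower_words u) \<Longrightarrow> b_positions t \<subseteq> b_positions u"
proof (induction u arbitrary: t)
  case (Cons a u)
  then obtain b t' where t: "t = b # t'" "t' \<in> set (lower_words u)" "b \<longrightarrow> a"
    by (auto split: if_splits)
  then show ?case using Cons.IH[OF t(2)] by (auto simp: b_positions_Cons)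
qed simp

lemma lower_words_b_positions_surj:
  "T \<subseteq> b_positions u \<Longrightarrow> \<exists>t\<in>set (lower_words u). b_positions t = T"
proof (induction u arbitrary: T)
  case (Cons a u)
  define T' where "T' = {j. 1 \<le> j \<and> Suc j \<in> T}"
  have "T' \<subseteq> b_positions u"
    using Cons.prems by (auto simp: T'_def b_positions_Cons split: if_splits)
  then obtain t' where t': "t' \<in> set (lower_words u)" "b_positions t' = T'"
    using Cons.IH by blast
  have "0 \<notin> T" using Cons.prems b_positions_subset[of "a # u"] by auto
  have "b_positions ((1 \<in> T) # t') = T"
  proof (rule set_eqI)
    fix i show "i \<in> b_positions ((1 \<in> T) # t') \<longleftrightarrow> i \<in> T"
      using \<open>0 \<notin> T\<close> t'(2) by (cases i; cases "i - 1") (auto simp: b_positions_Cons T'_def)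
  qed
  moreover have "1 \<in> T \<Longrightarrow> a"
    using Cons.prems b_positions_subset[of u] by (auto simp: b_positions_Cons split: if_splits)
  then have "(1 \<in> T) # t' \<in> set (lower_words (a # u))" using t'(1) by auto
  ultimately show ?case by blast
qed simp

lemma Pow_b_positions: "Pow (b_positions u) = b_positions ` set (lower_words u)"
  using lower_words_b_positions_surj b_positions_lower_words by blast

lemma b_positions_snoc:
  "b_positions (s @ [x]) = (if x then insert (Suc (length s)) (b_positions s) else b_positions s)"
  by (auto simp: b_positions_def nth_append le_Suc_eq)

lemma b_positions_snoc_minus: "length s + 1 = n \<Longrightarrow> b_positions (s @ [a]) - {n} = b_positions s"
  using b_positions_subset[of s] by (auto simp: b_positions_snoc)

lemma mem_b_positions_snoc: "length s + 1 = n \<Longrightarrow> n \<in> b_positions (s @ [a]) \<longleftrightarrow> a"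
  using b_positions_subset[of s] by (auto simp: b_positions_snoc)

lemma not_mem_b_positions: "length s < n \<Longrightarrow> n \<notin> b_positions s"
  using b_positions_subset[of s] by auto

lemma flag_h_eq_sum_lower_words:
  "flag_h E lt rk (b_positions u) =
     (\<Sum>t\<leftarrow>lower_words u. (-1) ^ (count_list u True - count_list t True) * flag_f E lt rk (b_positions t))"
proof -
  have inj: "inj_on b_positions (set (lower_words u))"
    by (rule inj_onI) (auto intro: b_positions_inject simp: length_lower_words)
  have card_diff: "card (b_positions u - b_positions t) = count_list u True - count_list t True"
    if "t \<in> set (lower_words u)" for t
    using that b_positions_lower_words card_Diff_subset finite_b_positions card_b_positions by metis
  show ?thesis
    unfolding flag_h_def Pow_b_positions sum.reindex[OF inj]
    by (simp add: card_diff sum_list_distinct_conv_sum_set distinct_lower_words)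
qed

lemma cd_index_eqI_flag_f:
  assumes deg: "\<And>w. cd_deg w \<noteq> n \<Longrightarrow> Phi w = 0"
    and flag_f: "\<And>t. length t = n \<Longrightarrow>
      (\<Sum>w | cd_deg w = n. Phi w * cd_flag_f w t) = flag_f E lt rk (b_positions t)"
  shows "cd_index E lt rk n = Phi"
proof (rule cd_index_eqI)
  let ?h = "\<lambda>v. \<Sum>w | cd_deg w = n. Phi w * cd_expand w v"
  have "?h u = flag_h E lt rk (b_positions u)" if u: "length u = n" for u
  proof -
    have "flag_f E lt rk (b_positions t) = (\<Sum>v\<leftarrow>lower_words t. ?h v)"
      if "t \<in> set (lower_words u)" for t
    proof -
      have "length t = n" using that u by (simp add: length_lower_words)
      then have "flag_f E lt rk (b_positions t) = (\<Sum>w | cd_deg w = n. Phi w * cd_flag_f w t)"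
        by (simp add: flag_f)
      also have "\<dots> = (\<Sum>v\<leftarrow>lower_words t. ?h v)"
        by (simp add: cd_flag_f_eq_sum_lower_words sum_list_const_mult[symmetric] sum_list_sum_nth
            sum_distrib_left sum.swap[of _ "{w. cd_deg w = n}"])
      finally show ?thesis .
    qed
    then show ?thesis
      by (simp add: flag_h_eq_sum_lower_words alternating_sum_lower_words cong: map_cong)
  qed
  then show "is_cd_index E lt rk n Phi"
    unfolding is_cd_index_def using deg by blast
qed

section \<open>The cd-index of the Boolean algebra\<close>

definition pair_derivation :: "(bool list \<Rightarrow> int) \<Rightarrow> bool \<Rightarrow> bool \<Rightarrow> bool list \<Rightarrow> int" where
  "pair_derivation P a b t =
     (if a \<and> \<not> b then P (False # t) else if \<not> a \<and> b then P (True # t) - P (False # t)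
      else if a \<and> b then P (True # t) else 0)"

text \<open>If \<open>P = cd_flag_f w\<close> then \<open>flag_derivation P = \<Sum>v\<in>G(w). cd_flag_f v\<close> for the derivation \<open>G\<close>
  with \<open>G(c) = d\<close> and \<open>G(d) = cd\<close> (\<open>sum_cd_derivation_cd_flag_f\<close>).\<close>

fun flag_derivation :: "(bool list \<Rightarrow> int) \<Rightarrow> bool list \<Rightarrow> int" where
  "flag_derivation P (a # b # t) = pair_derivation P a b t + flag_derivation (\<lambda>s. P (a # s)) (b # t)"
| "flag_derivation P _ = 0"

definition flag_times_c :: "(bool list \<Rightarrow> int) \<Rightarrow> bool list \<Rightarrow> int" where
  "flag_times_c P t = (if t = [] then 0 else (if last t then 2 else 1) * P (butlast t))"

text \<open>\<open>drop_sum P t\<close> sums \<open>P\<close> over the words obtained from \<open>t\<close> by deleting an entry that is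
  immediately followed by \<open>True\<close>.\<close>

fun drop_sum :: "(bool list \<Rightarrow> int) \<Rightarrow> bool list \<Rightarrow> int" where
  "drop_sum P (a # b # t) = (if b then P (b # t) else 0) + drop_sum (\<lambda>s. P (a # s)) (b # t)"
| "drop_sum P _ = 0"

definition flag_step :: "(bool list \<Rightarrow> int) \<Rightarrow> bool list \<Rightarrow> int" where
  "flag_step P t = (case t of [] \<Rightarrow> 0 | a # r \<Rightarrow> (if a then P r else 0) + P (butlast t) + drop_sum P t)"

fun weighted_cons :: "(bool \<Rightarrow> int) \<Rightarrow> (bool list \<Rightarrow> int) \<Rightarrow> bool list \<Rightarrow> int" where
  "weighted_cons \<alpha> Q (a # s) = \<alpha> a * Q s"
| "weighted_cons \<alpha> Q [] = 0"

fun weighted_cons2 :: "(bool \<Rightarrow> bool \<Rightarrow> int) \<Rightarrow> (bool list \<Rightarrow> int) \<Rightarrow> bool list \<Rightarrow> int" where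
  "weighted_cons2 \<beta> Q (a # b # s) = \<beta> a b * Q s"
| "weighted_cons2 \<beta> Q _ = 0"

definition weight_derivation :: "(bool \<Rightarrow> int) \<Rightarrow> bool \<Rightarrow> bool \<Rightarrow> int" where
  "weight_derivation \<alpha> a b =
     (if a \<and> \<not> b then \<alpha> False else if \<not> a \<and> b then \<alpha> True - \<alpha> False
      else if a \<and> b then \<alpha> True else 0)"

lemma flag_derivation_scale: "flag_derivation (\<lambda>s. k * P s) t = k * flag_derivation P t"
  by (induction P t rule: flag_derivation.induct) (auto simp: pair_derivation_def algebra_simps)

lemma flag_derivation_zero: "flag_derivation (\<lambda>s. 0) t = 0"
  using flag_derivation_scale[of 0 "\<lambda>s. 0" t] by simp

lemma flag_derivation_add: "flag_derivation (\<lambda>s. P s + Q s) t = flag_derivation P t + flag_derivation Q t"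
proof (induction P t arbitrary: Q rule: flag_derivation.induct)
  case (1 P a b t)
  then show ?case using 1[of "\<lambda>s. Q (a # s)"] by (simp add: pair_derivation_def)
qed auto

lemma flag_derivation_sum_list:
  "flag_derivation (\<lambda>s. \<Sum>x\<leftarrow>xs. f x s) t = (\<Sum>x\<leftarrow>xs. flag_derivation (f x) t)"
proof (induction xs)
  case Nil
  then show ?case using flag_derivation_zero by simp
next
  case (Cons x xs)
  then show ?case using flag_derivation_add[of "f x" "\<lambda>s. \<Sum>x\<leftarrow>xs. f x s" t] by simp
qed

lemma flag_derivation_weighted_cons:
  "flag_derivation (weighted_cons \<alpha> Q) t
     = weighted_cons2 (weight_derivation \<alpha>) Q t + weighted_cons \<alpha> (flag_derivation Q) t"
proof (cases "\<exists>a b t'. t = a # b # t'")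
  case True
  then obtain a b t' where t: "t = a # b # t'" by blast
  have "(\<lambda>s. weighted_cons \<alpha> Q (a # s)) = (\<lambda>s. \<alpha> a * Q s)" by simp
  then show ?thesis
    using t by (simp add: flag_derivation_scale pair_derivation_def weight_derivation_def left_diff_distrib)
next
  case False
  then consider "t = []" | a where "t = [a]" by (cases t; cases "tl t") auto
  then show ?thesis by cases auto
qed

lemma flag_derivation_weighted_cons2:
  defines "\<beta> \<equiv> \<lambda>a b. of_bool a + of_bool b"
  shows "flag_derivation (weighted_cons2 \<beta> Q) t
     = weighted_cons (\<lambda>a. if a then 2 else 1) (weighted_cons2 \<beta> Q) t + weighted_cons2 \<beta> (flag_derivation Q) t"
proof (cases "\<exists>a b t'. t = a # b # t'")
  case True
  then obtain a b t' where t: "t = a # b # t'" by blast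
  have shift: "(\<lambda>s. weighted_cons2 \<beta> Q (a # s)) = weighted_cons (\<beta> a) Q"
    by (rule ext, case_tac s) auto
  show ?thesis
  proof (cases t')
    case Nil
    then show ?thesis using t by (simp add: shift flag_derivation_weighted_cons pair_derivation_def)
  next
    case (Cons c t'')
    then show ?thesis
      using t by (cases a; cases b; cases c)
        (simp_all add: shift flag_derivation_weighted_cons pair_derivation_def weight_derivation_def \<beta>_def
          flag_derivation_scale flag_derivation_zero)
  qed
next
  case False
  then consider "t = []" | a where "t = [a]" by (cases t; cases "tl t") auto
  then show ?thesis by cases auto
qed

lemma flag_step_eq: "flag_step P t = flag_times_c P t + flag_derivation P t"
proof (induction t arbitrary: P)
  case (Cons a r)
  have IH: "flag_step (\<lambda>s. P (a # s)) r = flag_times_c (\<lambda>s. P (a # s)) r + flag_derivation (\<lambda>s. P (a # s)) r"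
    by (rule Cons.IH)
  show ?case
  proof (cases r)
    case (Cons b r')
    then show ?thesis using IH
      by (cases a; cases b) (auto simp: flag_step_def flag_times_c_def pair_derivation_def)
  qed (simp add: flag_step_def flag_times_c_def)
qed (simp add: flag_step_def flag_times_c_def)

fun cd_derivation :: "cd list \<Rightarrow> cd list list" where
  "cd_derivation [] = []"
| "cd_derivation (C # w) = (D # w) # map ((#) C) (cd_derivation w)"
| "cd_derivation (D # w) = (C # D # w) # map ((#) D) (cd_derivation w)"

lemma cd_flag_f_C: "cd_flag_f (C # w) = weighted_cons (\<lambda>a. if a then 2 else 1) (cd_flag_f w)"
proof
  fix t show "cd_flag_f (C # w) t = weighted_cons (\<lambda>a. if a then 2 else 1) (cd_flag_f w) t"
    by (cases t) auto
qed

lemma cd_flag_f_D: "cd_flag_f (D # w) = weighted_cons2 (\<lambda>a b. of_bool a + of_bool b) (cd_flag_f w)"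
proof
  fix t show "cd_flag_f (D # w) t = weighted_cons2 (\<lambda>a b. of_bool a + of_bool b) (cd_flag_f w) t"
    by (cases t rule: remdups_adj.cases) auto
qed

lemma sum_list_weighted_cons:
  "(\<Sum>x\<leftarrow>xs. weighted_cons \<alpha> (f x) t) = weighted_cons \<alpha> (\<lambda>s. \<Sum>x\<leftarrow>xs. f x s) t"
  by (cases t) (auto simp: sum_list_const_mult)

lemma sum_list_weighted_cons2:
  "(\<Sum>x\<leftarrow>xs. weighted_cons2 \<beta> (f x) t) = weighted_cons2 \<beta> (\<lambda>s. \<Sum>x\<leftarrow>xs. f x s) t"
  by (cases t rule: remdups_adj.cases) (auto simp: sum_list_const_mult)

lemma sum_cd_derivation_cd_flag_f:
  "(\<Sum>v\<leftarrow>cd_derivation w. cd_flag_f v t) = flag_derivation (cd_flag_f w) t"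
proof (induction w arbitrary: t)
  case Nil
  have "(\<lambda>s. cd_flag_f [] (a # s)) = (\<lambda>s. 0)" for a by (rule ext) simp
  then show ?case
    by (cases t rule: remdups_adj.cases) (auto simp: pair_derivation_def flag_derivation_zero)
next
  case (Cons x w)
  have IH: "(\<lambda>s. \<Sum>v\<leftarrow>cd_derivation w. cd_flag_f v s) = flag_derivation (cd_flag_f w)"
    using Cons by (intro ext) simp
  show ?case
  proof (cases x)
    case C
    have "weight_derivation (\<lambda>a. if a then 2 else 1) = (\<lambda>a b. of_bool a + of_bool b)"
      by (intro ext) (auto simp: weight_derivation_def)
    then show ?thesis
      using C by (simp add: comp_def cd_flag_f_C cd_flag_f_D sum_list_weighted_cons IH
          flag_derivation_weighted_cons)
  next
    case D
    then show ?thesis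
      by (simp add: comp_def cd_flag_f_C cd_flag_f_D sum_list_weighted_cons2 IH
          flag_derivation_weighted_cons2)
  qed
qed

lemma length_eq_cd_deg_if_cd_flag_f: "cd_flag_f w t \<noteq> 0 \<Longrightarrow> length t = cd_deg w"
  by (induction w t rule: cd_flag_f.induct) (auto split: if_splits)

lemma cd_flag_f_append:
  "length s = cd_deg v \<Longrightarrow> cd_flag_f (v @ w) (s @ t) = cd_flag_f v s * cd_flag_f w t"
  by (induction v s rule: cd_flag_f.induct) auto

lemma cd_flag_f_snoc_C: "cd_flag_f (w @ [C]) t = flag_times_c (cd_flag_f w) t"
proof (cases "length t = Suc (cd_deg w)")
  case True
  then obtain s a where "t = s @ [a]" "length s = cd_deg w"
    by (metis length_Suc_conv_rev)
  then show ?thesis by (simp add: cd_flag_f_append flag_times_c_def)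
next
  case False
  then have "cd_flag_f (w @ [C]) t = 0"
    using length_eq_cd_deg_if_cd_flag_f[of "w @ [C]" t] by (auto simp: cd_deg_append)
  moreover have "cd_flag_f w (butlast t) = 0" if "t \<noteq> []"
  proof (rule ccontr)
    assume "cd_flag_f w (butlast t) \<noteq> 0"
    then have "length (butlast t) = cd_deg w" by (rule length_eq_cd_deg_if_cd_flag_f)
    then show False using False that by (cases "length t") auto
  qed
  ultimately show ?thesis by (simp add: flag_times_c_def)
qed

lemma cd_deg_cd_derivation: "v \<in> set (cd_derivation w) \<Longrightarrow> cd_deg v = Suc (cd_deg w)"
  by (induction w arbitrary: v rule: cd_derivation.induct) auto

text \<open>The cd-index of the Boolean algebra \<open>B\<^sub>k\<^sub>+\<^sub>1\<close> (the face poset of the boundary of a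
  \<open>k\<close>-simplex) as a list of monomials with multiplicities, computed by the recursion
  \<open>\<Phi>(B\<^sub>k\<^sub>+\<^sub>2) = \<Phi>(B\<^sub>k\<^sub>+\<^sub>1) c + G(\<Phi>(B\<^sub>k\<^sub>+\<^sub>1))\<close> of Ehrenborg and Readdy.\<close>

fun boolean_cd :: "nat \<Rightarrow> cd list list" where
  "boolean_cd 0 = [[]]"
| "boolean_cd (Suc k) = map (\<lambda>w. w @ [C]) (boolean_cd k) @ concat (map cd_derivation (boolean_cd k))"

lemma cd_deg_boolean_cd: "w \<in> set (boolean_cd k) \<Longrightarrow> cd_deg w = k"
  by (induction k arbitrary: w) (auto simp: cd_deg_append dest: cd_deg_cd_derivation)

text \<open>\<open>chain_number N (rev t)\<close> is the number of chains of nonempty subsets of an \<open>N\<close>-set whose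
  cardinalities are the positions of \<open>True\<close> in \<open>t\<close> (\<open>card_rank_chains_nonempty_subsets\<close>); the reversed list is
  read from the largest cardinality down.\<close>

fun chain_number :: "nat \<Rightarrow> bool list \<Rightarrow> nat" where
  "chain_number N [] = 1"
| "chain_number N (False # r) = chain_number N r"
| "chain_number N (True # r) = (N choose Suc (length r)) * chain_number (Suc (length r)) r"

definition boolean_flag_f :: "nat \<Rightarrow> bool list \<Rightarrow> int" where
  "boolean_flag_f k t = (if length t = k then int (chain_number (Suc k) (rev t)) else 0)"

lemma drop_sum_snoc:
  "drop_sum P (s @ [x]) = drop_sum (\<lambda>r. P (r @ [x])) s + (if s = [] \<or> \<not> x then 0 else P (butlast s @ [True]))"
proof (induction s arbitrary: P)
  case (Cons a s)
  then show ?case using Cons.IH[of "\<lambda>r. P (a # r)"] by (cases s) auto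
qed simp

lemma drop_sum_last_True:
  "drop_sum P (s @ True # replicate m False) = drop_sum (\<lambda>r. P (r @ True # replicate m False)) s
     + (if s = [] then 0 else P (butlast s @ True # replicate m False))"
proof (induction m arbitrary: P)
  case 0
  then show ?case using drop_sum_snoc[of P s True] by simp
next
  case (Suc m)
  have snoc_False: "r @ True # replicate (Suc m) False = (r @ True # replicate m False) @ [False]" for r
    by (simp add: replicate_append_same[symmetric])
  show ?case
    unfolding snoc_False drop_sum_snoc using Suc[of "\<lambda>r. P (r @ [False])"] by simp
qed

lemma drop_sum_replicate_False: "drop_sum P (replicate m False) = 0"
proof (induction m arbitrary: P)
  case (Suc m)
  then show ?case by (cases m) auto
qed simp

lemma drop_sum_cong: "(\<And>s. length s + 1 = length t \<Longrightarrow> P s = Q s) \<Longrightarrow> drop_sum P t = drop_sum Q t"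
proof (induction P t arbitrary: Q rule: drop_sum.induct)
  case (1 P a b t)
  have "drop_sum (\<lambda>s. P (a # s)) (b # t) = drop_sum (\<lambda>s. Q (a # s)) (b # t)"
    by (rule 1(1)) (use 1(2) in auto)
  then show ?case using 1(2)[of "b # t"] by (cases b) auto
qed auto

lemma drop_sum_scale: "drop_sum (\<lambda>s. k * P s) t = k * drop_sum P t"
  by (induction P t rule: drop_sum.induct) (auto simp: algebra_simps)

lemma drop_sum_eq_0: "(\<And>s. length s + 1 = length t \<Longrightarrow> P s = 0) \<Longrightarrow> drop_sum P t = 0"
  using drop_sum_cong[of t P "\<lambda>s. 0 * P s"] drop_sum_scale[of 0 P t] by simp

lemma chain_number_replicate_False: "chain_number N (replicate m False @ r) = chain_number N r"
  by (induction m) auto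

lemma boolean_flag_f_replicate_False: "boolean_flag_f k (replicate k False) = 1"
  using chain_number_replicate_False[of "Suc k" k "[]"] by (simp add: boolean_flag_f_def)

lemma boolean_flag_f_last_True:
  "length t + 1 + m = k \<Longrightarrow>
     boolean_flag_f k (t @ True # replicate m False) = int (Suc k choose Suc (length t)) * boolean_flag_f (length t) t"
  by (simp add: boolean_flag_f_def chain_number_replicate_False[of _ m "True # rev t", unfolded replicate_append_same])

lemma boolean_flag_f_butlast_last_True:
  assumes "length t + 1 + m = Suc k"
  shows "boolean_flag_f k (butlast (t @ True # replicate m False))
    = int (Suc k choose Suc (length t)) * boolean_flag_f (length t) t"
proof (cases m)
  case (Suc m')
  then have "butlast (t @ True # replicate m False) = t @ True # replicate m' False"
    by (simp add: butlast_append replicate_append_same[symmetric])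
  then show ?thesis using assms Suc boolean_flag_f_last_True[of t m' k] by simp
qed (use assms in \<open>simp add: butlast_append\<close>)

lemma last_True_cases:
  obtains (no_True) "t = replicate (length t) False"
    | (last_True) t' m where "t = t' @ True # replicate m False"
proof (induction t arbitrary: thesis rule: rev_induct)
  case (snoc x s)
  show ?case
  proof (cases x)
    case False
    show ?thesis
    proof (rule snoc.IH)
      assume "s = replicate (length s) False"
      then have "s @ [x] = replicate (length (s @ [x])) False"
        using False by (metis (full_types) length_append_singleton replicate_Suc replicate_append_same)
      then show ?thesis by (rule snoc.prems(1))
    next
      fix t' m assume "s = t' @ True # replicate m False"
      then show ?thesis using False snoc.prems(2)[of t' "Suc m"] by (simp add: replicate_append_same[symmetric])
    qed
  qed (use snoc.prems(2)[of s 0] in simp)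
qed simp

lemma flag_step_Cons:
  "flag_step P (a # r) = (if a then P r else 0) + P (butlast (a # r)) + drop_sum P (a # r)"
  unfolding flag_step_def by (simp only: list.case)

lemma flag_step_boolean_flag_f_last_True:
  assumes IH: "flag_step (boolean_flag_f j) (a # t) = boolean_flag_f (Suc j) (a # t)"
    and j: "length t = j" and k: "j + 2 + m = Suc k"
  shows "flag_step (boolean_flag_f k) (a # t @ True # replicate m False)
    = boolean_flag_f (Suc k) (a # t @ True # replicate m False)"
proof -
  let ?t0 = "a # t" and ?suffix = "True # replicate m False"
  let ?c = "int (Suc k choose Suc j)" and ?c' = "int (Suc k choose Suc (Suc j))"
  have tail: "boolean_flag_f k (s @ ?suffix) = ?c * boolean_flag_f j s" if "length s = j" for s
    using boolean_flag_f_last_True[of s m k] that k by simp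
  have drop: "drop_sum (boolean_flag_f k) (?t0 @ ?suffix)
      = ?c * drop_sum (boolean_flag_f j) ?t0 + ?c * boolean_flag_f j (butlast ?t0)"
  proof -
    have "drop_sum (\<lambda>r. boolean_flag_f k (r @ ?suffix)) ?t0 = drop_sum (\<lambda>r. ?c * boolean_flag_f j r) ?t0"
      by (rule drop_sum_cong) (use j tail in simp)
    moreover have "boolean_flag_f k (butlast ?t0 @ ?suffix) = ?c * boolean_flag_f j (butlast ?t0)"
      by (rule tail) (simp add: j[symmetric])
    ultimately show ?thesis
      using drop_sum_last_True[of "boolean_flag_f k" ?t0 m] by (simp only: drop_sum_scale) simp
  qed
  have "flag_step (boolean_flag_f k) (?t0 @ ?suffix)
      = ?c * flag_step (boolean_flag_f j) ?t0 + ?c' * boolean_flag_f (Suc j) ?t0"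
    using boolean_flag_f_butlast_last_True[of ?t0 m k] tail[of t] drop j k
    by (simp only: flag_step_Cons append_Cons) (simp add: algebra_simps del: binomial_Suc_Suc)
  also have "\<dots> = int (Suc (Suc k) choose Suc (Suc j)) * boolean_flag_f (Suc j) ?t0"
    \<comment> \<open>Pascal's rule\<close>
    by (simp add: IH algebra_simps)
  also have "\<dots> = boolean_flag_f (Suc k) (?t0 @ ?suffix)"
    using boolean_flag_f_last_True[of ?t0 m "Suc k"] j k by simp
  finally show ?thesis by simp
qed

lemma flag_step_boolean_flag_f: "flag_step (boolean_flag_f k) t = boolean_flag_f (Suc k) t"
proof (induction k arbitrary: t rule: less_induct)
  case (less k)
  show ?case
  proof (cases "length t = Suc k")
    case False
    have "drop_sum (boolean_flag_f k) t = 0"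
      using False by (intro drop_sum_eq_0) (simp add: boolean_flag_f_def)
    moreover have "boolean_flag_f (Suc k) t = 0" and "t \<noteq> [] \<Longrightarrow> boolean_flag_f k (butlast t) = 0"
      and "t \<noteq> [] \<Longrightarrow> boolean_flag_f k (tl t) = 0"
      using False by (auto simp: boolean_flag_f_def)
    ultimately show ?thesis by (cases t) (simp_all add: flag_step_def)
  next
    case True
    show ?thesis
    proof (cases t rule: last_True_cases)
      case no_True
      then have t: "t = False # replicate k False" using True by (metis replicate_Suc)
      moreover have "butlast (False # replicate k False) = replicate k False"
        by (metis butlast_snoc replicate_Suc replicate_append_same)
      ultimately show ?thesis
        using boolean_flag_f_replicate_False[of k] boolean_flag_f_replicate_False[of "Suc k"]
          drop_sum_replicate_False[of _ "Suc k"]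
        by (simp add: flag_step_def del: replicate_Suc) (simp add: t)
    next
      case (last_True t' m)
      show ?thesis
      proof (cases t')
        case Nil
        then have t: "t = True # replicate k False" and m: "m = k" using last_True True by simp_all
        have "boolean_flag_f 0 [] = 1" by (simp add: boolean_flag_f_def)
        then have "boolean_flag_f k (butlast t) = int (Suc k)"
          and "boolean_flag_f (Suc k) t = int (Suc (Suc k))"
          using boolean_flag_f_butlast_last_True[of "[]" k k] boolean_flag_f_last_True[of "[]" k "Suc k"]
          by (simp_all add: t)
        moreover have "drop_sum (boolean_flag_f k) t = 0"
          using drop_sum_last_True[of _ "[]" k] by (simp add: t)
        ultimately show ?thesis
          using boolean_flag_f_replicate_False[of k] by (simp add: flag_step_Cons t)
      next
        case (Cons a t'')
        then show ?thesis
          using last_True True less[of "length t''" "a # t''"]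
          by (simp add: flag_step_boolean_flag_f_last_True)
      qed
    qed
  qed
qed

lemma sum_list_map_concat: "(\<Sum>x\<leftarrow>concat xss. f x) = (\<Sum>xs\<leftarrow>xss. \<Sum>x\<leftarrow>xs. f x)"
  by (induction xss) auto

lemma sum_boolean_cd_cd_flag_f: "(\<Sum>w\<leftarrow>boolean_cd k. cd_flag_f w t) = boolean_flag_f k t"
proof (induction k arbitrary: t)
  case 0
  then show ?case by (simp add: boolean_flag_f_def)
next
  case (Suc k)
  have "(\<Sum>w\<leftarrow>boolean_cd (Suc k). cd_flag_f w t)
      = (\<Sum>w\<leftarrow>boolean_cd k. flag_times_c (cd_flag_f w) t) + (\<Sum>w\<leftarrow>boolean_cd k. flag_derivation (cd_flag_f w) t)"
    by (simp add: comp_def sum_list_map_concat cd_flag_f_snoc_C sum_cd_derivation_cd_flag_f)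
  also have "\<dots> = flag_times_c (\<lambda>s. \<Sum>w\<leftarrow>boolean_cd k. cd_flag_f w s) t
      + flag_derivation (\<lambda>s. \<Sum>w\<leftarrow>boolean_cd k. cd_flag_f w s) t"
    by (simp add: flag_times_c_def sum_list_const_mult flag_derivation_sum_list)
  also have "\<dots> = boolean_flag_f (Suc k) t"
    using Suc by (simp add: flag_step_eq[symmetric] flag_step_boolean_flag_f)
  finally show ?case .
qed

lemma sum_boolean_cd_append_cd_flag_f:
  assumes "length s = k"
  shows "(\<Sum>v\<leftarrow>boolean_cd k. cd_flag_f (v @ u) (s @ r)) = int (chain_number (Suc k) (rev s)) * cd_flag_f u r"
proof -
  have "(\<Sum>v\<leftarrow>boolean_cd k. cd_flag_f (v @ u) (s @ r)) = (\<Sum>v\<leftarrow>boolean_cd k. cd_flag_f v s * cd_flag_f u r)"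
    using assms by (intro arg_cong[where f = sum_list] map_cong) (simp_all add: cd_flag_f_append cd_deg_boolean_cd)
  also have "\<dots> = int (chain_number (Suc k) (rev s)) * cd_flag_f u r"
    using assms by (simp add: sum_list_mult_const sum_boolean_cd_cd_flag_f boolean_flag_f_def)
  finally show ?thesis .
qed

lemma chain_number_Cons_top: "length r = N - 1 \<Longrightarrow> 1 \<le> N \<Longrightarrow> chain_number N (a # r) = chain_number N r"
  by (cases a) auto

lemma chain_number_Cons_above: "length r = N \<Longrightarrow> chain_number N (a # r) = (if a then 0 else chain_number N r)"
  by (cases a) auto

lemma C_to_D_in_cd_derivation: "u @ D # v \<in> set (cd_derivation (u @ C # v))"
  by (induction u rule: cd_derivation.induct) auto

lemma D_to_CD_in_cd_derivation: "u @ C # D # v \<in> set (cd_derivation (u @ D # v))"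
  by (induction u rule: cd_derivation.induct) auto

lemma count_boolean_cd_Suc:
  "count_list (boolean_cd (Suc k)) w =
     count_list (map (\<lambda>v. v @ [C]) (boolean_cd k)) w + (\<Sum>v\<leftarrow>boolean_cd k. count_list (cd_derivation v) w)"
  by (simp add: count_list_concat comp_def)

lemma count_map_snoc: "count_list (map (\<lambda>v. v @ [x]) vs) (w @ [x]) = count_list vs w"
  by (induction vs) auto

lemma count_le_sum_count_cd_derivation:
  "w \<in> set (cd_derivation u) \<Longrightarrow> count_list vs u \<le> (\<Sum>v\<leftarrow>vs. count_list (cd_derivation v) w)"
proof (induction vs)
  case (Cons x vs)
  have "x = u \<Longrightarrow> 1 \<le> count_list (cd_derivation x) w"
    using Cons.prems by (metis count_list_0_iff less_one not_le)
  then show ?case using Cons by auto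
qed simp

lemma count2_le_sum_count_cd_derivation:
  "u \<noteq> u' \<Longrightarrow> w \<in> set (cd_derivation u) \<Longrightarrow> w \<in> set (cd_derivation u') \<Longrightarrow>
    count_list vs u + count_list vs u' \<le> (\<Sum>v\<leftarrow>vs. count_list (cd_derivation v) w)"
proof (induction vs)
  case (Cons x vs)
  have "x = u \<Longrightarrow> 1 \<le> count_list (cd_derivation x) w" "x = u' \<Longrightarrow> 1 \<le> count_list (cd_derivation x) w"
    using Cons.prems by (metis count_list_0_iff less_one not_le)+
  then show ?case using Cons by auto
qed simp

lemma cd_deg_eq_3_cases: "cd_deg w = 3 \<Longrightarrow> w \<in> {[C, C, C], [C, D], [D, C]}"
proof -
  have deg1: "cd_deg v = 1 \<longleftrightarrow> v = [C]" for v
    using cd_deg_eq_Suc_iff[of v 0] by auto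
  have deg2: "cd_deg v = 2 \<longleftrightarrow> v = [C, C] \<or> v = [D]" for v
    using cd_deg_eq_Suc_iff[of v 1] deg1 by (auto simp: numeral_2_eq_2)
  show "cd_deg w = 3 \<Longrightarrow> w \<in> {[C, C, C], [C, D], [D, C]}"
    using cd_deg_eq_Suc_iff[of w 2] deg1 deg2 by (auto simp: numeral_3_eq_3 numeral_2_eq_2)
qed

lemma count_boolean_cd_lower_bound:
  "3 \<le> k \<Longrightarrow> cd_deg w = k \<Longrightarrow> 2 ^ count_list w D \<le> count_list (boolean_cd k) w"
proof (induction k arbitrary: w rule: nat_induct_at_least)
  case base
  then have "w \<in> {[C, C, C], [C, D], [D, C]}" by (rule cd_deg_eq_3_cases)
  then show ?case by (auto simp: numeral_3_eq_3)
next
  case (Suc k)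
  obtain w' x where w: "w = w' @ [x]"
    using Suc.prems by (metis cd_deg_eq_0_iff rev_exhaust Zero_neq_Suc)
  show ?case
  proof (cases x)
    case C
    then have "2 ^ count_list w D \<le> count_list (boolean_cd k) w'"
      using Suc w by (simp add: cd_deg_append)
    then show ?thesis
      using w C by (simp add: count_boolean_cd_Suc count_map_snoc)
  next
    case D
    then have "cd_deg w' = k - 1" and "w' \<noteq> []"
      using Suc w by (auto simp: cd_deg_append)
    then obtain u y where w': "w' = u @ [y]" by (metis rev_exhaust)
    show ?thesis
    proof (cases y)
      case C
      let ?v = "u @ [D]"
      have "w \<in> set (cd_derivation ?v)"
        using D_to_CD_in_cd_derivation[of u "[]"] w w' C D by simp
      moreover have "2 ^ count_list w D \<le> count_list (boolean_cd k) ?v"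
        using Suc.IH[of ?v] Suc.prems w w' C D by (simp add: cd_deg_append)
      ultimately show ?thesis
        unfolding count_boolean_cd_Suc using count_le_sum_count_cd_derivation[of w ?v "boolean_cd k"]
        by linarith
    next
      case y_D: D
      let ?v = "u @ [D, C]" and ?v' = "u @ [C, D]"
      have "w \<in> set (cd_derivation ?v)" "w \<in> set (cd_derivation ?v')"
        using C_to_D_in_cd_derivation[of "u @ [D]" "[]"] C_to_D_in_cd_derivation[of u "[D]"] w w' D y_D
        by simp_all
      moreover have "2 ^ count_list ?v D \<le> count_list (boolean_cd k) ?v"
        and "2 ^ count_list ?v' D \<le> count_list (boolean_cd k) ?v'"
        using Suc.IH[of ?v] Suc.IH[of ?v'] Suc.prems w w' D y_D by (simp_all add: cd_deg_append)
      moreover have "(2::nat) ^ count_list w D = 2 ^ count_list ?v D + 2 ^ count_list ?v' D"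
        using w w' D y_D by simp
      ultimately show ?thesis
        unfolding count_boolean_cd_Suc using count2_le_sum_count_cd_derivation[of ?v ?v' w "boolean_cd k"]
        by simp
    qed
  qed
qed

section \<open>Chains of subsets\<close>

definition nonempty_subsets :: "nat set \<Rightarrow> nat set set" where
  "nonempty_subsets A = {F. F \<noteq> {} \<and> F \<subseteq> A}"

definition rank_chains :: "nat set set \<Rightarrow> nat set \<Rightarrow> nat set set set" where
  "rank_chains Fs T = {c. c \<subseteq> Fs \<and> is_chain (\<subset>) c \<and> card ` c = T}"

lemma rank_chains_mono: "Fs \<subseteq> Gs \<Longrightarrow> rank_chains Fs T \<subseteq> rank_chains Gs T"
  by (auto simp: rank_chains_def)

lemma rank_chains_empty: "rank_chains Fs {} = {{}}"
  by (auto simp: rank_chains_def is_chain_def)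

lemma finite_rank_chains: "finite Fs \<Longrightarrow> finite (rank_chains Fs T)"
  by (rule finite_subset[of _ "Pow Fs"]) (auto simp: rank_chains_def)

lemma finite_nonempty_subsets: "finite A \<Longrightarrow> finite (nonempty_subsets A)"
  by (rule finite_subset[of _ "Pow A"]) (auto simp: nonempty_subsets_def)

lemma top_of_rank_chain:
  assumes c: "c \<in> rank_chains (nonempty_subsets A) (insert k T)" and A: "finite A" and T: "\<forall>s\<in>T. s < k"
  obtains X where "X \<in> c" and "X \<subseteq> A" and "card X = k" and "c - {X} \<in> rank_chains (nonempty_subsets X) T"
proof -
  have sub: "c \<subseteq> nonempty_subsets A" and chain: "is_chain (\<subset>) c" and ranks: "card ` c = insert k T"
    using c by (auto simp: rank_chains_def)
  have fin: "finite F" if "F \<in> c" for F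
  proof (rule finite_subset[OF _ A])
    show "F \<subseteq> A" using that sub by (auto simp: nonempty_subsets_def)
  qed
  have "k \<in> card ` c" using ranks by simp
  then obtain X where X: "X \<in> c" "card X = k" by blast
  have below: "F \<subset> X" if F: "F \<in> c" "F \<noteq> X" for F
  proof -
    have "\<not> X \<subset> F"
    proof
      assume "X \<subset> F"
      then have "k < card F" using psubset_card_mono[OF fin[OF F(1)] \<open>X \<subset> F\<close>] X(2) by simp
      moreover have "card F \<in> insert k T" using ranks F(1) by blast
      ultimately show False using T by auto
    qed
    then show ?thesis using chain F X(1) unfolding is_chain_def by blast
  qed
  have "card ` (c - {X}) = T"
  proof
    show "card ` (c - {X}) \<subseteq> T"
    proof (rule image_subsetI)
      fix F assume "F \<in> c - {X}"
      then have F: "F \<in> c" "F \<noteq> X" by auto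
      then have "card F < k" using psubset_card_mono[OF fin[OF X(1)] below[OF F]] X(2) by simp
      moreover have "card F \<in> insert k T" using ranks F(1) by blast
      ultimately show "card F \<in> T" by simp
    qed
    show "T \<subseteq> card ` (c - {X})"
    proof
      fix s assume s: "s \<in> T"
      then have "s \<in> card ` c" using ranks by blast
      then obtain F where F: "F \<in> c" "card F = s" by blast
      moreover have "F \<noteq> X" using F X(2) T s by auto
      ultimately show "s \<in> card ` (c - {X})" by blast
    qed
  qed
  moreover have "c - {X} \<subseteq> nonempty_subsets X"
    using sub below by (auto simp: nonempty_subsets_def)
  moreover have "is_chain (\<subset>) (c - {X})"
    using chain by (auto simp: is_chain_def)
  ultimately have "c - {X} \<in> rank_chains (nonempty_subsets X) T"
    by (simp add: rank_chains_def)
  moreover have "X \<subseteq> A" using sub X(1) by (auto simp: nonempty_subsets_def)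
  ultimately show ?thesis using that X by blast
qed

lemma insert_top_rank_chain:
  assumes "X \<subseteq> A" and "card X = k" and "1 \<le> k" and c: "c \<in> rank_chains (nonempty_subsets X) T"
    and T: "\<forall>s\<in>T. s < k"
  shows "insert X c \<in> rank_chains (nonempty_subsets A) (insert k T)"
proof -
  have below: "F \<subset> X" if "F \<in> c" for F
    using c that T assms(2) by (auto simp: rank_chains_def nonempty_subsets_def)
  then show ?thesis
    using assms by (auto simp: rank_chains_def nonempty_subsets_def is_chain_def)
qed

lemma rank_chains_insert_top:
  assumes A: "finite A" and k: "1 \<le> k" and T: "\<forall>s\<in>T. s < k"
  shows "rank_chains (nonempty_subsets A) (insert k T)
    = (\<Union>X\<in>{X. X \<subseteq> A \<and> card X = k}. insert X ` rank_chains (nonempty_subsets X) T)"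
proof
  show "rank_chains (nonempty_subsets A) (insert k T)
      \<subseteq> (\<Union>X\<in>{X. X \<subseteq> A \<and> card X = k}. insert X ` rank_chains (nonempty_subsets X) T)"
  proof
    fix c assume "c \<in> rank_chains (nonempty_subsets A) (insert k T)"
    then obtain X where X: "X \<in> c" "X \<subseteq> A" "card X = k" "c - {X} \<in> rank_chains (nonempty_subsets X) T"
      using A T by (rule top_of_rank_chain)
    then have "c \<in> insert X ` rank_chains (nonempty_subsets X) T" by (metis image_eqI insert_Diff)
    then show "c \<in> (\<Union>X\<in>{X. X \<subseteq> A \<and> card X = k}. insert X ` rank_chains (nonempty_subsets X) T)"
      using X(2,3) by blast
  qed
  show "(\<Union>X\<in>{X. X \<subseteq> A \<and> card X = k}. insert X ` rank_chains (nonempty_subsets X) T)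
      \<subseteq> rank_chains (nonempty_subsets A) (insert k T)"
  proof (rule UN_least, rule image_subsetI)
    fix X c assume "X \<in> {X. X \<subseteq> A \<and> card X = k}" "c \<in> rank_chains (nonempty_subsets X) T"
    then show "insert X c \<in> rank_chains (nonempty_subsets A) (insert k T)"
      using k T by (intro insert_top_rank_chain) auto
  qed
qed

lemma card_rank_chains_insert_top:
  assumes A: "finite A" and k: "1 \<le> k" and T: "\<forall>s\<in>T. s < k"
  shows "card (rank_chains (nonempty_subsets A) (insert k T))
    = (\<Sum>X | X \<subseteq> A \<and> card X = k. card (rank_chains (nonempty_subsets X) T))"
proof -
  let ?Xs = "{X. X \<subseteq> A \<and> card X = k}" and ?chains = "\<lambda>X. rank_chains (nonempty_subsets X) T"
  have not_in: "X \<notin> c" if "X \<in> ?Xs" "c \<in> ?chains X" for X c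
    using that T by (auto simp: rank_chains_def)
  have "card (rank_chains (nonempty_subsets A) (insert k T)) = (\<Sum>X\<in>?Xs. card (insert X ` ?chains X))"
    unfolding rank_chains_insert_top[OF assms]
  proof (rule card_UN_disjoint)
    show "finite ?Xs" using A by simp
    show "\<forall>X\<in>?Xs. finite (insert X ` ?chains X)"
    proof
      fix X assume "X \<in> ?Xs"
      then have "finite X" using A by (metis (mono_tags) finite_subset mem_Collect_eq)
      then show "finite (insert X ` ?chains X)"
        by (intro finite_imageI finite_rank_chains finite_nonempty_subsets)
    qed
    show "\<forall>X\<in>?Xs. \<forall>Y\<in>?Xs. X \<noteq> Y \<longrightarrow> insert X ` ?chains X \<inter> insert Y ` ?chains Y = {}"
    proof (intro ballI impI equals0I)
      fix X Y d assume X: "X \<in> ?Xs" and "Y \<in> ?Xs" "X \<noteq> Y"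
        and "d \<in> insert X ` ?chains X \<inter> insert Y ` ?chains Y"
      then obtain c c' where "c' \<in> ?chains Y" "insert X c = insert Y c'" by (auto simp: image_iff)
      then have "X \<in> c'" "c' \<in> ?chains Y" using \<open>X \<noteq> Y\<close> by blast+
      then have "card X \<in> T" by (auto simp: rank_chains_def)
      then show False using X T by auto
    qed
  qed
  also have "\<dots> = (\<Sum>X\<in>?Xs. card (?chains X))"
  proof (rule sum.cong[OF refl], rule card_image, rule inj_onI)
    fix X c c' assume "X \<in> ?Xs" "c \<in> ?chains X" "c' \<in> ?chains X" "insert X c = insert X c'"
    then show "c = c'" using not_in by (metis insert_ident)
  qed
  finally show ?thesis .
qed

lemma card_rank_chains_nonempty_subsets:
  "finite A \<Longrightarrow> card (rank_chains (nonempty_subsets A) (b_positions t)) = chain_number (card A) (rev t)"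
proof (induction t arbitrary: A rule: rev_induct)
  case (snoc x s)
  show ?case
  proof (cases x)
    case True
    let ?k = "Suc (length s)"
    have "\<forall>j\<in>b_positions s. j < ?k" using b_positions_subset[of s] by auto
    then have "card (rank_chains (nonempty_subsets A) (b_positions (s @ [x])))
        = (\<Sum>X | X \<subseteq> A \<and> card X = ?k. card (rank_chains (nonempty_subsets X) (b_positions s)))"
      using True card_rank_chains_insert_top[OF snoc.prems] by (simp add: b_positions_snoc)
    also have "\<dots> = (\<Sum>X | X \<subseteq> A \<and> card X = ?k. chain_number ?k (rev s))"
      using snoc by (intro sum.cong refl) (metis (mono_tags) finite_subset mem_Collect_eq)
    finally show ?thesis using True n_subsets[OF snoc.prems] by simp
  qed (use snoc in \<open>simp add: b_positions_snoc\<close>)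
qed (simp add: rank_chains_empty)

section \<open>The complexes \<open>\<Lambda>\<^sup>n\<^sub>0\<close> and \<open>\<Lambda>\<^sup>n\<^sub>1\<close>\<close>

definition Gamma :: "nat \<Rightarrow> nat \<Rightarrow> nat set set" where
  "Gamma n i = {F. F \<noteq> {} \<and> (\<exists>j\<le>i. F \<subseteq> {0..n} - {j})}"

definition Gamma_boundary :: "nat \<Rightarrow> nat \<Rightarrow> nat set set" where
  "Gamma_boundary n i = {F \<in> Gamma n i. \<exists>j k. j \<le> i \<and> i < k \<and> k \<le> n \<and> j \<notin> F \<and> k \<notin> F}"

lemma finite_Gamma: "finite (Gamma n i)"
  by (rule finite_subset[of _ "Pow {0..n}"]) (auto simp: Gamma_def)

lemma Gamma_boundary_subset: "Gamma_boundary n i \<subseteq> Gamma n i"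
  by (auto simp: Gamma_boundary_def)

lemma finite_Gamma_boundary: "finite (Gamma_boundary n i)"
  using finite_Gamma Gamma_boundary_subset by (rule finite_subset[rotated])

lemma card_Gamma_boundary_less:
  assumes "i < n" and "F \<in> Gamma_boundary n i"
  shows "card F < n"
proof -
  obtain j k where jk: "j \<le> i" "i < k" "k \<le> n" "j \<notin> F" "k \<notin> F"
    using assms(2) by (auto simp: Gamma_boundary_def)
  have "F \<subseteq> {0..n} - {j, k}" using assms(2) jk by (auto simp: Gamma_boundary_def Gamma_def)
  then have "card F \<le> card ({0..n} - {j, k})" by (intro card_mono) auto
  also have "\<dots> = n - 1" using jk assms(1) by (subst card_Diff_subset) auto
  finally show ?thesis using assms(1) by linarith
qed

lemma Lam_elems_eq: "Lam_elems n i = Some ` Gamma n i \<union> {None}"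
  by (simp add: Lam_elems_def Gamma_def)

lemma is_chain_Some_image_iff: "is_chain (Lam_less n i) (Some ` c) \<longleftrightarrow> is_chain (\<subset>) c"
  by (simp add: is_chain_def Lam_less_def)

lemma is_chain_insert:
  "is_chain R (insert x S) \<longleftrightarrow> is_chain R S \<and> (\<forall>y\<in>S. y \<noteq> x \<longrightarrow> R x y \<or> R y x)"
  unfolding is_chain_def by auto

lemma is_chain_insert_None_iff:
  assumes "c \<subseteq> Gamma n i"
  shows "is_chain (Lam_less n i) (insert None (Some ` c)) \<longleftrightarrow> is_chain (\<subset>) c \<and> c \<subseteq> Gamma_boundary n i"
proof -
  have "Lam_less n i None (Some F) \<or> Lam_less n i (Some F) None \<longleftrightarrow> F \<in> Gamma_boundary n i" if "F \<in> c" for F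
    using assms that by (auto simp: Lam_less_def Gamma_boundary_def)
  then show ?thesis
    by (auto simp: is_chain_insert is_chain_Some_image_iff)
qed

lemma Lam_chain_cases:
  assumes "c \<subseteq> Lam_elems n i" and "is_chain (Lam_less n i) c"
  obtains (faces) c' where "c = Some ` c'" and "c' \<subseteq> Gamma n i" and "is_chain (\<subset>) c'"
    | (with_tau) c' where "c = insert None (Some ` c')" and "c' \<subseteq> Gamma_boundary n i" and "is_chain (\<subset>) c'"
proof -
  define c' where "c' = {F. Some F \<in> c}"
  have c'_Gamma: "c' \<subseteq> Gamma n i" using assms(1) by (auto simp: c'_def Lam_elems_eq)
  have c_eq: "c = (if None \<in> c then insert None (Some ` c') else Some ` c')"
  proof (rule set_eqI)
    fix x show "x \<in> c \<longleftrightarrow> x \<in> (if None \<in> c then insert None (Some ` c') else Some ` c')"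
      by (cases x) (auto simp: c'_def)
  qed
  show ?thesis
  proof (cases "None \<in> c")
    case False
    then show ?thesis
      using faces[of c'] c_eq c'_Gamma assms(2) by (simp add: is_chain_Some_image_iff)
  next
    case True
    then show ?thesis
      using with_tau[of c'] c_eq assms(2) is_chain_insert_None_iff[OF c'_Gamma] by simp
  qed
qed

lemma Lam_chains_eq:
  assumes "i < n"
  shows "{c. c \<subseteq> Lam_elems n i \<and> is_chain (Lam_less n i) c \<and> Lam_rank n ` c = T}
    = image Some ` rank_chains (Gamma n i) T
      \<union> (if n \<in> T then (\<lambda>c. insert None (Some ` c)) ` rank_chains (Gamma_boundary n i) (T - {n}) else {})"
    (is "?S = ?A \<union> ?B")
proof
  have ranks: "Lam_rank n ` Some ` c = card ` c" for c
    by (simp add: image_image Lam_rank_def)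
  show "?S \<subseteq> ?A \<union> ?B"
  proof
    fix c assume "c \<in> ?S"
    then have c: "c \<subseteq> Lam_elems n i" "is_chain (Lam_less n i) c" "Lam_rank n ` c = T" by auto
    from c(1,2) show "c \<in> ?A \<union> ?B"
    proof (cases rule: Lam_chain_cases)
      case (faces c')
      then show ?thesis using c(3) ranks by (auto simp: rank_chains_def)
    next
      case (with_tau c')
      have "n \<notin> card ` c'" using with_tau(2) card_Gamma_boundary_less[OF assms] by fastforce
      moreover have "T = insert n (card ` c')" using c(3) with_tau(1) ranks by (simp add: Lam_rank_def)
      ultimately show ?thesis using with_tau by (auto simp: rank_chains_def)
    qed
  qed
  show "?A \<union> ?B \<subseteq> ?S"
  proof
    fix c assume "c \<in> ?A \<union> ?B"
    then consider c' where "c = Some ` c'" "c' \<in> rank_chains (Gamma n i) T"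
      | c' where "c = insert None (Some ` c')" "c' \<in> rank_chains (Gamma_boundary n i) (T - {n})" "n \<in> T"
      by (auto split: if_splits)
    then show "c \<in> ?S"
    proof cases
      case 1
      then have "c' \<subseteq> Gamma n i" "is_chain (\<subset>) c'" "card ` c' = T" by (simp_all add: rank_chains_def)
      then show ?thesis using 1(1) by (auto simp: Lam_elems_eq is_chain_Some_image_iff ranks)
    next
      case 2
      then have "c' \<subseteq> Gamma_boundary n i" "is_chain (\<subset>) c'" "card ` c' = T - {n}"
        by (simp_all add: rank_chains_def)
      moreover from this have "c' \<subseteq> Gamma n i" using Gamma_boundary_subset by blast
      ultimately show ?thesis
        using 2(1,3) is_chain_insert_None_iff[of c' n i] ranks by (auto simp: Lam_elems_eq Lam_rank_def)
    qed
  qed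
qed

lemma flag_f_Lam_eq:
  assumes "i < n"
  shows "flag_f (Lam_elems n i) (Lam_less n i) (Lam_rank n) T =
     int (card (rank_chains (Gamma n i) T))
     + (if n \<in> T then int (card (rank_chains (Gamma_boundary n i) (T - {n}))) else 0)"
proof -
  have inj_Some: "inj_on (image Some) X" for X :: "nat set set set"
    by (rule inj_onI) (simp add: inj_image_eq_iff)
  have inj_None: "inj_on (\<lambda>c. insert None (Some ` c)) X" for X :: "nat set set set"
  proof (rule inj_onI)
    fix c c' :: "nat set set" assume "insert None (Some ` c) = insert None (Some ` c')"
    then have "Some ` c = Some ` c'" by (metis image_iff insert_ident option.distinct(1))
    then show "c = c'" by (simp add: inj_image_eq_iff)
  qed
  let ?A = "image Some ` rank_chains (Gamma n i) T"
    and ?B = "(\<lambda>c. insert None (Some ` c)) ` rank_chains (Gamma_boundary n i) (T - {n})"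
  have "finite ?A" "finite ?B"
    by (simp_all add: finite_rank_chains finite_Gamma finite_Gamma_boundary)
  moreover have "?A \<inter> ?B = {}" by auto
  ultimately show ?thesis
    unfolding flag_f_def Lam_chains_eq[OF assms]
    by (simp add: card_Un_disjoint card_image[OF inj_Some] card_image[OF inj_None])
qed

lemma Gamma_0: "Gamma n 0 = nonempty_subsets {1..n}"
  by (auto simp: Gamma_def nonempty_subsets_def)

lemma Gamma_1: "Gamma n 1 = nonempty_subsets {1..n} \<union> nonempty_subsets ({0..n} - {1})"
proof -
  have "(\<exists>j\<le>1. F \<subseteq> {0..n} - {j}) \<longleftrightarrow> F \<subseteq> {0..n} - {0} \<or> F \<subseteq> {0..n} - {1}" for F :: "nat set"
    by (metis le_SucE le_zero_eq One_nat_def order_refl zero_le_one)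
  moreover have "{0..n} - {0} = {1..n}" by auto
  ultimately show ?thesis by (auto simp: Gamma_def nonempty_subsets_def)
qed

lemma rank_chains_Gamma_boundary_0:
  assumes "n \<notin> T"
  shows "rank_chains (Gamma_boundary n 0) T = rank_chains (Gamma n 0) T"
proof
  show "rank_chains (Gamma n 0) T \<subseteq> rank_chains (Gamma_boundary n 0) T"
  proof
    fix c assume c: "c \<in> rank_chains (Gamma n 0) T"
    have "F \<in> Gamma_boundary n 0" if F: "F \<in> c" for F
    proof -
      have "F \<subseteq> {1..n}" "F \<in> Gamma n 0" using c F by (auto simp: rank_chains_def Gamma_0 nonempty_subsets_def)
      moreover have "card F \<in> T" using c F by (auto simp: rank_chains_def)
      then have "F \<noteq> {1..n}" using assms by auto
      ultimately obtain k where "k \<in> {1..n}" "k \<notin> F" by blast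
      then show ?thesis using \<open>F \<subseteq> {1..n}\<close> \<open>F \<in> Gamma n 0\<close>
        by (auto simp: Gamma_boundary_def intro!: exI[of _ 0] exI[of _ k])
    qed
    then show "c \<in> rank_chains (Gamma_boundary n 0) T" using c by (auto simp: rank_chains_def)
  qed
qed (rule rank_chains_mono[OF Gamma_boundary_subset])

lemma finite_chain_has_top:
  assumes "finite c" and "c \<noteq> {}" and "is_chain (\<subset>) c" and "\<And>F. F \<in> c \<Longrightarrow> finite F"
  shows "\<exists>M\<in>c. \<forall>F\<in>c. F \<subseteq> M"
proof -
  have "Max (card ` c) \<in> card ` c" using assms(1,2) by (intro Max_in) auto
  then obtain M where M: "M \<in> c" "card M = Max (card ` c)" by auto
  have "F \<subseteq> M" if F: "F \<in> c" for F
  proof (cases "F = M")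
    case False
    have "card F \<le> card M" using M assms(1) F by simp
    then have "\<not> M \<subset> F" using psubset_card_mono[OF assms(4)[OF F]] by (meson not_le)
    then show ?thesis using assms(3) F M(1) False unfolding is_chain_def by blast
  qed simp
  then show ?thesis using M(1) by blast
qed

lemma rank_chains_Un:
  assumes A: "finite A" and B: "finite B"
  shows "rank_chains (nonempty_subsets A \<union> nonempty_subsets B) T
    = rank_chains (nonempty_subsets A) T \<union> rank_chains (nonempty_subsets B) T"
proof
  show "rank_chains (nonempty_subsets A \<union> nonempty_subsets B) T
      \<subseteq> rank_chains (nonempty_subsets A) T \<union> rank_chains (nonempty_subsets B) T"
  proof
    fix c assume c: "c \<in> rank_chains (nonempty_subsets A \<union> nonempty_subsets B) T"
    then have sub: "c \<subseteq> nonempty_subsets A \<union> nonempty_subsets B" and chain: "is_chain (\<subset>) c"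
      by (auto simp: rank_chains_def)
    have fin: "finite F" if "F \<in> c" for F
      using sub that A B by (auto simp: nonempty_subsets_def dest: finite_subset)
    have "finite c"
      using sub A B by (auto simp: nonempty_subsets_def intro: finite_subset[of _ "Pow (A \<union> B)"])
    show "c \<in> rank_chains (nonempty_subsets A) T \<union> rank_chains (nonempty_subsets B) T"
    proof (cases "c = {}")
      case False
      then obtain M where M: "M \<in> c" "\<forall>F\<in>c. F \<subseteq> M"
        using finite_chain_has_top[OF \<open>finite c\<close> _ chain fin] by blast
      then have "c \<subseteq> nonempty_subsets A \<or> c \<subseteq> nonempty_subsets B"
        using sub by (auto simp: nonempty_subsets_def) (blast+)
      then show ?thesis using c by (auto simp: rank_chains_def)
    qed (use c in \<open>auto simp: rank_chains_def\<close>)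
  qed
qed (auto intro: rank_chains_mono[THEN subsetD])

lemma card_rank_chains_Un:
  assumes "finite A" and "finite B"
  shows "int (card (rank_chains (nonempty_subsets A \<union> nonempty_subsets B) T)) =
     int (card (rank_chains (nonempty_subsets A) T)) + int (card (rank_chains (nonempty_subsets B) T))
     - int (card (rank_chains (nonempty_subsets (A \<inter> B)) T))"
proof -
  have "rank_chains (nonempty_subsets A) T \<inter> rank_chains (nonempty_subsets B) T
      = rank_chains (nonempty_subsets (A \<inter> B)) T"
    by (auto simp: rank_chains_def nonempty_subsets_def)
  then show ?thesis
    using card_Un_Int[of "rank_chains (nonempty_subsets A) T" "rank_chains (nonempty_subsets B) T"] assms
    by (simp add: rank_chains_Un finite_rank_chains finite_nonempty_subsets)
qed

lemma card_Gamma_1_le: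
  assumes "F \<in> Gamma n 1" and "1 \<le> n"
  shows "card F \<le> n"
proof -
  obtain j where j: "j \<le> 1" "F \<subseteq> {0..n} - {j}" using assms(1) by (auto simp: Gamma_def)
  then have "card F \<le> card ({0..n} - {j})" by (intro card_mono) auto
  also have "\<dots> = n" using j(1) assms(2) by (subst card_Diff_subset) auto
  finally show ?thesis .
qed

lemma Gamma_1_not_boundary:
  assumes n: "2 \<le> n" and F: "F \<in> Gamma n 1" "F \<notin> Gamma_boundary n 1"
  shows "card F = n \<or> F = {2..n}"
proof -
  obtain j where j: "j \<le> 1" "F \<subseteq> {0..n} - {j}" using F(1) by (auto simp: Gamma_def)
  have Z: "{2..n} \<subseteq> F"
  proof
    fix k assume k: "k \<in> {2..n}"
    show "k \<in> F"
    proof (rule ccontr)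
      assume "k \<notin> F"
      then have "F \<in> Gamma_boundary n 1"
        using F(1) j k unfolding Gamma_boundary_def by (intro CollectI conjI exI[of _ j] exI[of _ k]) auto
      then show False using F(2) by simp
    qed
  qed
  show ?thesis
  proof (cases "F = {2..n}")
    case False
    then obtain x where x: "x \<in> F" "x \<notin> {2..n}" using Z by blast
    have "finite F" using j(2) finite_subset by blast
    have "n = card (insert x {2..n})" using x n by simp
    also have "\<dots> \<le> card F" using x Z \<open>finite F\<close> by (intro card_mono) auto
    finally show ?thesis using card_Gamma_1_le[OF F(1)] n by simp
  qed simp
qed

lemma rank_chains_Gamma_1:
  assumes n: "2 \<le> n" and T: "n \<notin> T"
  shows "rank_chains (Gamma n 1) T
    = rank_chains (Gamma_boundary n 1) T \<union> {c \<in> rank_chains (nonempty_subsets {2..n}) T. {2..n} \<in> c}"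
proof
  let ?Z = "{2..n}"
  have Z_Gamma: "nonempty_subsets ?Z \<subseteq> Gamma n 1"
    by (auto simp: Gamma_def nonempty_subsets_def intro!: exI[of _ 0])
  show "rank_chains (Gamma n 1) T
      \<subseteq> rank_chains (Gamma_boundary n 1) T \<union> {c \<in> rank_chains (nonempty_subsets ?Z) T. ?Z \<in> c}"
  proof
    fix c assume c: "c \<in> rank_chains (Gamma n 1) T"
    then have sub: "c \<subseteq> Gamma n 1" and chain: "is_chain (\<subset>) c" and ranks: "card ` c = T"
      by (auto simp: rank_chains_def)
    have below_n: "card F < n" if "F \<in> c" for F
      using card_Gamma_1_le[of F n] sub that T ranks n by fastforce
    show "c \<in> rank_chains (Gamma_boundary n 1) T \<union> {c \<in> rank_chains (nonempty_subsets ?Z) T. ?Z \<in> c}"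
    proof (cases "?Z \<in> c")
      case False
      then have "c \<subseteq> Gamma_boundary n 1"
        using Gamma_1_not_boundary[OF n] sub below_n by fastforce
      then show ?thesis using chain ranks by (simp add: rank_chains_def)
    next
      case True
      have "F \<subseteq> ?Z" if F: "F \<in> c" for F
      proof (rule ccontr)
        assume "\<not> F \<subseteq> ?Z"
        then have "?Z \<subset> F" using chain F True unfolding is_chain_def by blast
        then have "card ?Z < card F"
          using psubset_card_mono[of F ?Z] sub F by (auto simp: Gamma_def intro: finite_subset[of _ "{0..n}"])
        then show False using below_n[OF F] by simp
      qed
      then have "c \<subseteq> nonempty_subsets ?Z" using sub by (auto simp: Gamma_def nonempty_subsets_def)
      then show ?thesis using True chain ranks by (simp add: rank_chains_def)
    qed
  qed
  show "rank_chains (Gamma_boundary n 1) T \<union> {c \<in> rank_chains (nonempty_subsets ?Z) T. ?Z \<in> c}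
      \<subseteq> rank_chains (Gamma n 1) T"
    using rank_chains_mono[OF Gamma_boundary_subset] rank_chains_mono[OF Z_Gamma] by blast
qed

lemma rank_chains_containing_top:
  assumes "finite Z"
  shows "{c \<in> rank_chains (nonempty_subsets Z) T. Z \<in> c}
    = (if card Z \<in> T then rank_chains (nonempty_subsets Z) T else {})"
proof -
  have "Z \<in> c" if c: "c \<in> rank_chains (nonempty_subsets Z) T" and "card Z \<in> T" for c
  proof -
    obtain F where F: "F \<in> c" "card F = card Z" using c \<open>card Z \<in> T\<close> by (auto simp: rank_chains_def)
    then have "F \<subseteq> Z" using c by (auto simp: rank_chains_def nonempty_subsets_def)
    then have "F = Z" using card_subset_eq[OF assms _ F(2)] by blast
    then show ?thesis using F(1) by simp
  qed
  then show ?thesis by (auto simp: rank_chains_def)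
qed

lemma card_rank_chains_Gamma_1:
  assumes n: "2 \<le> n" and T: "n \<notin> T"
  shows "card (rank_chains (Gamma n 1) T) = card (rank_chains (Gamma_boundary n 1) T)
     + (if n - 1 \<in> T then card (rank_chains (nonempty_subsets {2..n}) T) else 0)"
proof -
  have "{2..n} \<notin> Gamma_boundary n 1" by (auto simp: Gamma_boundary_def)
  then have "rank_chains (Gamma_boundary n 1) T \<inter> {c \<in> rank_chains (nonempty_subsets {2..n}) T. {2..n} \<in> c} = {}"
    by (auto simp: rank_chains_def)
  then show ?thesis
    unfolding rank_chains_Gamma_1[OF assms]
    by (simp add: card_Un_disjoint finite_rank_chains finite_Gamma_boundary finite_nonempty_subsets
        rank_chains_containing_top)
qed

definition Lambda0_cd :: "nat \<Rightarrow> cd list \<Rightarrow> int" where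
  "Lambda0_cd n w = int (count_list (map (\<lambda>v. v @ [C]) (boolean_cd (n - 1))) w)"

definition Lambda1_cd :: "nat \<Rightarrow> cd list \<Rightarrow> int" where
  "Lambda1_cd n w = 2 * Lambda0_cd n w - int (count_list (map (\<lambda>v. v @ [C, C]) (boolean_cd (n - 2))) w)
     + int (count_list (map (\<lambda>v. v @ [D]) (boolean_cd (n - 2))) w)"

lemma cd_deg_snoc_boolean_cd:
  assumes "2 \<le> n"
  shows "set (map (\<lambda>v. v @ [C]) (boolean_cd (n - 1))) \<subseteq> {w. cd_deg w = n}"
    and "set (map (\<lambda>v. v @ [C, C]) (boolean_cd (n - 2))) \<subseteq> {w. cd_deg w = n}"
    and "set (map (\<lambda>v. v @ [D]) (boolean_cd (n - 2))) \<subseteq> {w. cd_deg w = n}"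
  using assms by (auto simp: cd_deg_append dest: cd_deg_boolean_cd)

lemma flag_f_Lambda0:
  assumes n: "2 \<le> n" and s: "length s + 1 = n"
  shows "flag_f (Lam_elems n 0) (Lam_less n 0) (Lam_rank n) (b_positions (s @ [a]))
    = (if a then 2 else 1) * int (chain_number n (rev s))"
proof -
  have "flag_f (Lam_elems n 0) (Lam_less n 0) (Lam_rank n) (b_positions (s @ [a]))
      = int (chain_number n (a # rev s)) + (if a then int (chain_number n (rev s)) else 0)"
    using n s mem_b_positions_snoc[OF s] b_positions_snoc_minus[OF s]
      rank_chains_Gamma_boundary_0[OF not_mem_b_positions[of s n]]
      card_rank_chains_nonempty_subsets[of "{1..n}" "s @ [a]"] card_rank_chains_nonempty_subsets[of "{1..n}" s]
    by (simp add: flag_f_Lam_eq Gamma_0)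
  then show ?thesis
    using chain_number_Cons_top[of "rev s" n a] s by simp
qed

lemma Phi_Lam_0: "2 \<le> n \<Longrightarrow> Phi_Lam n 0 = Lambda0_cd n"
  unfolding Phi_Lam_def
proof (rule cd_index_eqI_flag_f)
  fix w :: "cd list" assume "2 \<le> n" "cd_deg w \<noteq> n"
  then show "Lambda0_cd n w = 0"
    using cd_deg_snoc_boolean_cd(1) by (auto simp: Lambda0_cd_def count_list_0_iff)
next
  fix t :: "bool list" assume n: "2 \<le> n" and t: "length t = n"
  then obtain s a where s: "t = s @ [a]" "length s + 1 = n"
    by (cases t rule: rev_cases) auto
  have "(\<Sum>w | cd_deg w = n. Lambda0_cd n w * cd_flag_f w t) = (\<Sum>v\<leftarrow>boolean_cd (n - 1). cd_flag_f (v @ [C]) (s @ [a]))"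
    unfolding Lambda0_cd_def using sum_count_list_mult[OF finite_cd_deg_eq cd_deg_snoc_boolean_cd(1)[OF n]]
    by (simp add: s comp_def)
  also have "\<dots> = flag_f (Lam_elems n 0) (Lam_less n 0) (Lam_rank n) (b_positions t)"
    using sum_boolean_cd_append_cd_flag_f[of s "n - 1" "[C]" "[a]"] flag_f_Lambda0[OF n s(2)] s by simp
  finally show "(\<Sum>w | cd_deg w = n. Lambda0_cd n w * cd_flag_f w t) = flag_f (Lam_elems n 0) (Lam_less n 0) (Lam_rank n) (b_positions t)" .
qed

lemma int_card_rank_chains_Gamma_1:
  assumes "2 \<le> n"
  shows "int (card (rank_chains (Gamma n 1) (b_positions t)))
    = 2 * int (chain_number n (rev t)) - int (chain_number (n - 1) (rev t))"
  unfolding Gamma_1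
proof -
  have "{1..n} \<inter> ({0..n} - {1}) = {2..n}" by auto
  moreover have "card ({0..n} - {1::nat}) = n" using assms by (subst card_Diff_subset) auto
  ultimately show "int (card (rank_chains (nonempty_subsets {1..n} \<union> nonempty_subsets ({0..n} - {1})) (b_positions t)))
      = 2 * int (chain_number n (rev t)) - int (chain_number (n - 1) (rev t))"
    using assms card_rank_chains_Un[of "{1..n}" "{0..n} - {1}"] card_rank_chains_nonempty_subsets[of "{1..n}" t]
      card_rank_chains_nonempty_subsets[of "{0..n} - {1}" t] card_rank_chains_nonempty_subsets[of "{2..n}" t]
    by simp
qed

lemma flag_f_Lambda1:
  assumes n: "2 \<le> n" and s: "length s + 2 = n"
  shows "flag_f (Lam_elems n 1) (Lam_less n 1) (Lam_rank n) (b_positions (s @ [b, a])) =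
     (2 * int (chain_number n (b # rev s)) - (if a then 0 else int (chain_number (n - 1) (rev s))))
     + (if a then 2 * int (chain_number n (b # rev s)) - int (chain_number (n - 1) (rev s))
           - (if b then int (chain_number (n - 1) (rev s)) else 0) else 0)"
proof -
  let ?s = "s @ [b]"
  have s': "length ?s + 1 = n" using s by simp
  have top: "chain_number n (a # b # rev s) = chain_number n (b # rev s)"
    using chain_number_Cons_top[of "b # rev s" n a] s by simp
  have above: "chain_number (n - 1) (a # b # rev s) = (if a then 0 else chain_number (n - 1) (b # rev s))"
    using chain_number_Cons_above[of "b # rev s" "n - 1" a] s by simp
  have top': "chain_number (n - 1) (b # rev s) = chain_number (n - 1) (rev s)"
    using chain_number_Cons_top[of "rev s" "n - 1" b] s by simp
  have "n - 1 \<in> b_positions ?s \<longleftrightarrow> b" using mem_b_positions_snoc[of s "n - 1" b] s by simp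
  then have "int (card (rank_chains (Gamma_boundary n 1) (b_positions ?s)))
      = int (card (rank_chains (Gamma n 1) (b_positions ?s))) - (if b then int (chain_number (n - 1) (rev s)) else 0)"
    using card_rank_chains_Gamma_1[OF n not_mem_b_positions[of ?s n]] s
      card_rank_chains_nonempty_subsets[of "{2..n}" ?s] top'
    by (cases b) simp_all
  then show ?thesis
    using n flag_f_Lam_eq[of 1 n] mem_b_positions_snoc[OF s'] b_positions_snoc_minus[OF s']
      int_card_rank_chains_Gamma_1[OF n, of "?s @ [a]"] int_card_rank_chains_Gamma_1[OF n, of ?s] top above top'
    by simp
qed

lemma Phi_Lam_1: "2 \<le> n \<Longrightarrow> Phi_Lam n 1 = Lambda1_cd n"
  unfolding Phi_Lam_def
proof (rule cd_index_eqI_flag_f)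
  fix w :: "cd list" assume "2 \<le> n" "cd_deg w \<noteq> n"
  then have "w \<notin> set (map (\<lambda>v. v @ [C]) (boolean_cd (n - 1)))"
    "w \<notin> set (map (\<lambda>v. v @ [C, C]) (boolean_cd (n - 2)))"
    "w \<notin> set (map (\<lambda>v. v @ [D]) (boolean_cd (n - 2)))"
    using cd_deg_snoc_boolean_cd by blast+
  then show "Lambda1_cd n w = 0"
    by (simp add: Lambda1_cd_def Lambda0_cd_def count_list_0_iff)
next
  fix t :: "bool list" assume n: "2 \<le> n" and t: "length t = n"
  then obtain s b a where s: "t = s @ [b, a]" "length s + 2 = n"
    by (cases t rule: rev_cases; case_tac ys rule: rev_cases) auto
  let ?L0 = "map (\<lambda>v. v @ [C]) (boolean_cd (n - 1))"
  let ?L1 = "map (\<lambda>v. v @ [C, C]) (boolean_cd (n - 2))"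
  let ?L2 = "map (\<lambda>v. v @ [D]) (boolean_cd (n - 2))"
  have "(\<Sum>w | cd_deg w = n. Lambda1_cd n w * cd_flag_f w t) =
     2 * (\<Sum>w | cd_deg w = n. int (count_list ?L0 w) * cd_flag_f w t)
     - (\<Sum>w | cd_deg w = n. int (count_list ?L1 w) * cd_flag_f w t)
     + (\<Sum>w | cd_deg w = n. int (count_list ?L2 w) * cd_flag_f w t)"
    by (simp add: Lambda1_cd_def Lambda0_cd_def algebra_simps sum.distrib sum_subtractf sum_distrib_left)
  also have "\<dots> = 2 * (\<Sum>v\<leftarrow>?L0. cd_flag_f v t) - (\<Sum>v\<leftarrow>?L1. cd_flag_f v t) + (\<Sum>v\<leftarrow>?L2. cd_flag_f v t)"
    using sum_count_list_mult[OF finite_cd_deg_eq cd_deg_snoc_boolean_cd(1)[OF n]]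
      sum_count_list_mult[OF finite_cd_deg_eq cd_deg_snoc_boolean_cd(2)[OF n]]
      sum_count_list_mult[OF finite_cd_deg_eq cd_deg_snoc_boolean_cd(3)[OF n]]
    by simp
  also have "(\<Sum>v\<leftarrow>?L0. cd_flag_f v t) = int (chain_number n (b # rev s)) * cd_flag_f [C] [a]"
    using sum_boolean_cd_append_cd_flag_f[of "s @ [b]" "n - 1" "[C]" "[a]"] s by (simp add: comp_def)
  also have "(\<Sum>v\<leftarrow>?L1. cd_flag_f v t) = int (chain_number (n - 1) (rev s)) * cd_flag_f [C, C] [b, a]"
    using sum_boolean_cd_append_cd_flag_f[of s "n - 2" "[C, C]" "[b, a]"] s
    by (simp add: comp_def Suc_diff_Suc numeral_2_eq_2)
  also have "(\<Sum>v\<leftarrow>?L2. cd_flag_f v t) = int (chain_number (n - 1) (rev s)) * cd_flag_f [D] [b, a]"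
    using sum_boolean_cd_append_cd_flag_f[of s "n - 2" "[D]" "[b, a]"] s
    by (simp add: comp_def Suc_diff_Suc numeral_2_eq_2)
  also have "2 * (int (chain_number n (b # rev s)) * cd_flag_f [C] [a])
      - int (chain_number (n - 1) (rev s)) * cd_flag_f [C, C] [b, a]
      + int (chain_number (n - 1) (rev s)) * cd_flag_f [D] [b, a]
      = flag_f (Lam_elems n 1) (Lam_less n 1) (Lam_rank n) (b_positions t)"
    unfolding s(1) flag_f_Lambda1[OF n s(2)] by (cases a; cases b) (simp_all add: algebra_simps)
  finally show "(\<Sum>w | cd_deg w = n. Lambda1_cd n w * cd_flag_f w t)
      = flag_f (Lam_elems n 1) (Lam_less n 1) (Lam_rank n) (b_positions t)" .
qed

lemma Phi_check_1_snoc_D: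
  assumes "2 \<le> n"
  shows "Phi_check n 1 (w @ [D]) = int (count_list (boolean_cd (n - 2)) w)"
proof -
  have "count_list (map (\<lambda>v. v @ [C]) vs) (w @ [D]) = 0"
    and "count_list (map (\<lambda>v. v @ [C, C]) vs) (w @ [D]) = 0" for vs
    by (auto simp: count_list_0_iff)
  then show ?thesis
    unfolding Phi_check_def using Phi_Lam_0[OF assms] Phi_Lam_1[OF assms] count_map_snoc[of D "boolean_cd (n - 2)" w]
    by (simp add: Lambda1_cd_def Lambda0_cd_def)
qed

theorem proposition4p6:
  fixes n m :: nat and w :: "cd list"
  assumes "n \<ge> 5" and "cd_deg w = n - 2" and "count_list w D = m"
  shows "2 ^ m \<le> card {xs. distinct xs \<and> set xs = {1..n} \<and> is_andre xs
                          \<and> cd_type xs = w @ [D] \<and> perm_at xs n = n - 1}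
       \<and> 2 ^ m \<le> Phi_check n 1 (w @ [D])"
proof
  have deg: "cd_deg w + 2 = n" and not_D: "w \<noteq> [D]"
    using assms(1,2) by auto
  show "2 ^ m \<le> card {xs. distinct xs \<and> set xs = {1..n} \<and> is_andre xs
                          \<and> cd_type xs = w @ [D] \<and> perm_at xs n = n - 1}"
    using card_andre_top_descent_lower_bound[OF deg not_D] assms(3) by simp
  have "2 ^ m \<le> count_list (boolean_cd (n - 2)) w"
    using count_boolean_cd_lower_bound[of "n - 2" w] assms by simp
  then show "2 ^ m \<le> Phi_check n 1 (w @ [D])"
    using Phi_check_1_snoc_D[of n w] assms(1) by simp
qed

end
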